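(* Let $T,T'\in\overline{\mathrm{Sub}}(X,1)$. (1) If $T\neq T'$ then $\mathcal{R}(T)\cap\mathcal{R}(T')=\emptyset$. (2) If $gT=T'$ for some $g\in F_N$, then $(\mu\times\nu)(\mathcal{R}(T))=(\mu\times\nu)(\mathcal{R}(T'))$ for all $\mu,\nu\in\mathcal{S}\mathrm{Curr}(F_N)$. (3) The map $\mathcal{S}\mathrm{Curr}(F_N)\times\mathcal{S}\mathrm{Curr}(F_N)\to\mathbb{R}_{\geq0}$, $(\mu,\nu)\mapsto(\mu\times\nu)(\mathcal{R}(T))$, is continuous and $\mathbb{R}_{\geq0}$-bilinear.
   Context: $N\geq2$, $F_N$ free with free basis $A$, $X$ its Cayley graph (a tree, vertex set $F_N$), $\partial X$ its boundary. $\mathcal{C}_N$: closed subsets of $\partial X$ with at least two points, Vietoris (Hausdorff) topology; $\mathcal{S}\mathrm{Curr}(F_N)$: $F_N$-invariant Borel measures on $\mathcal{C}_N$ finite on compact sets, with the weak-* topology. For $S\in\mathcal{C}_N$, $\mathrm{Conv}(S)$ is the union of bi-infinite geodesics in $X$ joining points of $S$. $\overline{\mathrm{Sub}}(X,1)$: the set of finite subtrees of $X$ containing the vertex $1$ (including the one-vertex tree $\{1\}$). $\mathcal{R}(T)=\{(S_1,S_2)\in\mathcal{C}_N\times\mathcal{C}_N:\mathrm{Conv}(S_1)\cap\mathrm{Conv}(S_2)=T\}$. *)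

theory Defs
  imports "HOL-Probability.Probability"
begin

text \<open>Letters: (i, False) is the basis element a_i, (i, True) its inverse; letter index i < N.\<close>
type_synonym letter = "nat \<times> bool"

definition letters :: "nat \<Rightarrow> letter set" where
  "letters N = {a. fst a < N}"

definition linv :: "letter \<Rightarrow> letter" where
  "linv a = (fst a, \<not> snd a)"

fun reduced :: "letter list \<Rightarrow> bool" where
  "reduced [] = True"
| "reduced [a] = True"
| "reduced (a # b # w) = (b \<noteq> linv a \<and> reduced (b # w))"

text \<open>Elements of F_N = vertices of X: reduced words over the basis.\<close>
definition FN :: "nat \<Rightarrow> letter list set" where
  "FN N = {w. set w \<subseteq> letters N \<and> reduced w}"

fun push :: "letter \<Rightarrow> letter list \<Rightarrow> letter list" where
  "push a [] = [a]"
| "push a (b # w) = (if b = linv a then w else a # b # w)"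

definition reduce :: "letter list \<Rightarrow> letter list" where
  "reduce w = foldr push w []"

definition gmul :: "letter list \<Rightarrow> letter list \<Rightarrow> letter list" where
  "gmul u v = reduce (u @ v)"

definition ginv :: "letter list \<Rightarrow> letter list" where
  "ginv u = rev (map linv u)"

text \<open>Graph metric of the Cayley graph X: d(u,v) = |u^{-1} v|.\<close>
definition Xdist :: "letter list \<Rightarrow> letter list \<Rightarrow> nat" where
  "Xdist u v = length (gmul (ginv u) v)"

text \<open>Boundary \<partial>X: infinite reduced words.\<close>
definition bdry :: "nat \<Rightarrow> (nat \<Rightarrow> letter) set" where
  "bdry N = {\<xi>. (\<forall>n. \<xi> n \<in> letters N) \<and> (\<forall>n. \<xi> (Suc n) \<noteq> linv (\<xi> n))}"

definition bdry_top :: "nat \<Rightarrow> (nat \<Rightarrow> letter) topology" where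
  "bdry_top N = subtopology (product_topology (\<lambda>_. discrete_topology (letters N)) UNIV) (bdry N)"

text \<open>Left action of F_N on \<partial>X.\<close>
fun cancel :: "letter list \<Rightarrow> (nat \<Rightarrow> letter) \<Rightarrow> letter list \<times> (nat \<Rightarrow> letter)" where
  "cancel [] \<xi> = ([], \<xi>)"
| "cancel (a # rs) \<xi> = (if \<xi> 0 = linv a then cancel rs (\<lambda>n. \<xi> (Suc n)) else (a # rs, \<xi>))"

definition bact :: "letter list \<Rightarrow> (nat \<Rightarrow> letter) \<Rightarrow> (nat \<Rightarrow> letter)" where
  "bact g \<xi> = (let (rs, \<eta>) = cancel (rev g) \<xi>; u = rev rs
               in (\<lambda>n. if n < length u then u ! n else \<eta> (n - length u)))"

definition bi_geodesic :: "nat \<Rightarrow> (int \<Rightarrow> letter list) \<Rightarrow> bool" where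
  "bi_geodesic N \<gamma> \<longleftrightarrow> (\<forall>n. \<gamma> n \<in> FN N) \<and> (\<forall>m n. int (Xdist (\<gamma> m) (\<gamma> n)) = \<bar>m - n\<bar>)"

definition conv_to :: "(int \<Rightarrow> letter list) \<Rightarrow> int filter \<Rightarrow> (nat \<Rightarrow> letter) \<Rightarrow> bool" where
  "conv_to \<gamma> F \<xi> \<longleftrightarrow> (\<forall>k. eventually (\<lambda>n. k \<le> length (\<gamma> n) \<and> take k (\<gamma> n) = map \<xi> [0..<k]) F)"

definition Conv :: "nat \<Rightarrow> (nat \<Rightarrow> letter) set \<Rightarrow> letter list set" where
  "Conv N S = {v. \<exists>\<xi>\<in>S. \<exists>\<eta>\<in>S. \<exists>\<gamma>. bi_geodesic N \<gamma> \<and> conv_to \<gamma> at_top \<xi>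
                      \<and> conv_to \<gamma> at_bot \<eta> \<and> v \<in> range \<gamma>}"

definition Xadj :: "letter list \<Rightarrow> letter list \<Rightarrow> bool" where
  "Xadj u v \<longleftrightarrow> Xdist u v = 1"

definition subtree_conn :: "letter list set \<Rightarrow> bool" where
  "subtree_conn T \<longleftrightarrow> (\<forall>u\<in>T. \<forall>v\<in>T. \<exists>p. p \<noteq> [] \<and> hd p = u \<and> last p = v \<and> set p \<subseteq> T
                        \<and> (\<forall>i. Suc i < length p \<longrightarrow> Xadj (p ! i) (p ! Suc i)))"

definition SubX1 :: "nat \<Rightarrow> letter list set set" where
  "SubX1 N = {T. T \<subseteq> FN N \<and> finite T \<and> [] \<in> T \<and> subtree_conn T}"

definition CN :: "nat \<Rightarrow> (nat \<Rightarrow> letter) set set" where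
  "CN N = {S. closedin (bdry_top N) S \<and> (\<exists>x\<in>S. \<exists>y\<in>S. x \<noteq> y)}"

definition vietoris :: "'a topology \<Rightarrow> 'a set topology" where
  "vietoris X = subtopology
     (topology_generated_by
        ({{K. closedin X K \<and> K \<subseteq> U} | U. openin X U}
         \<union> {{K. closedin X K \<and> K \<inter> U \<noteq> {}} | U. openin X U}))
     {K. closedin X K}"

definition CN_top :: "nat \<Rightarrow> (nat \<Rightarrow> letter) set topology" where
  "CN_top N = subtopology (vietoris (bdry_top N)) (CN N)"

definition borel_sets_of :: "'a topology \<Rightarrow> 'a set set" where
  "borel_sets_of X = sigma_sets (topspace X) {U. openin X U}"

definition SCurr :: "nat \<Rightarrow> (nat \<Rightarrow> letter) set measure set" where
  "SCurr N = {\<mu>. space \<mu> = CN N \<and> sets \<mu> = borel_sets_of (CN_top N)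
      \<and> (\<forall>K. compactin (CN_top N) K \<longrightarrow> emeasure \<mu> K < \<infinity>)
      \<and> (\<forall>g\<in>FN N. \<forall>A\<in>sets \<mu>.
            emeasure \<mu> ((\<lambda>S. bact g ` S) -` A \<inter> space \<mu>) = emeasure \<mu> A)}"

definition Cc :: "'a topology \<Rightarrow> ('a \<Rightarrow> real) set" where
  "Cc X = {f. continuous_map X euclideanreal f
              \<and> (\<exists>K. compactin X K \<and> (\<forall>x\<in>topspace X - K. f x = 0))}"

definition weakstar :: "nat \<Rightarrow> (nat \<Rightarrow> letter) set measure topology" where
  "weakstar N = subtopology
     (topology_generated_by
        {{\<mu> \<in> SCurr N. (\<integral>S. f S \<partial>\<mu>) \<in> U} | f U. f \<in> Cc (CN_top N) \<and> open U})
     (SCurr N)"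

definition RR :: "nat \<Rightarrow> letter list set \<Rightarrow> ((nat \<Rightarrow> letter) set \<times> (nat \<Rightarrow> letter) set) set" where
  "RR N T = {(S1, S2). S1 \<in> CN N \<and> S2 \<in> CN N \<and> Conv N S1 \<inter> Conv N S2 = T}"

text \<open>Cone operations on measures (on a common measurable space).\<close>
definition madd :: "'a measure \<Rightarrow> 'a measure \<Rightarrow> 'a measure" where
  "madd M M' = measure_of (space M) (sets M) (\<lambda>A. emeasure M A + emeasure M' A)"

definition msc :: "real \<Rightarrow> 'a measure \<Rightarrow> 'a measure" where
  "msc c M = measure_of (space M) (sets M) (\<lambda>A. ennreal c * emeasure M A)"

end

theory Submission
  imports Defs
begin

text \<open>
  The proof rests on a combinatorial description of convex hulls (Conv_eq): Conv S
  consists of the initial segments of points \<xi> \<in> S reaching at least to the branch point of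
  \<xi> with another point of S.  Hence, for a finite subtree T containing 1 and the level
  L = level T beyond all lengths in T, whether Conv S1 \<inter> Conv S2 = T only depends on the
  level-L patterns of S1 and S2, i.e. the sets of their initial segments of length L.  The
  pattern sets of C_N are clopen in the Vietoris topology, and compact when the pattern has two
  words (Alexander subbase theorem).  So R(T) is a finite disjoint union of rectangles of
  pattern sets (RR_decomp), and (\<mu> \<times> \<nu>)(R(T)) = \<Sum> \<mu>(pattern A) \<nu>(pattern B)
  (measure_RR_sum).  Each factor is finite and is the integral of a continuous compactly
  supported indicator, which gives finiteness, weak-* continuity and bilinearity.  Translation
  invariance follows from the equivariance of Conv: R(gT) is the translate of R(T), and
  preimages of pattern sets under translations are unions of deeper pattern sets.
\<close>

section \<open>Free reduction and the group F_N\<close>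

lemma linv_linv[simp]: "linv (linv a) = a"
  by (simp add: linv_def)

lemma linv_letters[simp]: "linv a \<in> letters N \<longleftrightarrow> a \<in> letters N"
  by (simp add: linv_def letters_def)

lemma reduced_Cons: "reduced (a # w) \<longleftrightarrow> reduced w \<and> (w \<noteq> [] \<longrightarrow> hd w \<noteq> linv a)"
  by (cases w) auto

lemma reduced_tl: "reduced w \<Longrightarrow> reduced (tl w)"
  by (cases w) (auto simp: reduced_Cons)

lemma reduced_nth: "reduced xs \<longleftrightarrow> (\<forall>i. Suc i < length xs \<longrightarrow> xs ! Suc i \<noteq> linv (xs ! i))"
proof (induction xs)
  case Nil then show ?case by simp
next
  case (Cons a xs)
  show ?case
  proof
    assume r: "reduced (a # xs)"
    show "\<forall>i. Suc i < length (a # xs) \<longrightarrow> (a # xs) ! Suc i \<noteq> linv ((a # xs) ! i)"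
    proof (intro allI impI)
      fix i assume i: "Suc i < length (a # xs)"
      show "(a # xs) ! Suc i \<noteq> linv ((a # xs) ! i)"
      proof (cases i)
        case 0 then show ?thesis using r i by (cases xs) auto
      next
        case (Suc j) then show ?thesis using r i Cons.IH by (auto simp: reduced_Cons)
      qed
    qed
  next
    assume h: "\<forall>i. Suc i < length (a # xs) \<longrightarrow> (a # xs) ! Suc i \<noteq> linv ((a # xs) ! i)"
    have "reduced xs" using Cons.IH h by force
    moreover have "xs \<noteq> [] \<longrightarrow> hd xs \<noteq> linv a" using h[rule_format, of 0] by (cases xs) auto
    ultimately show "reduced (a # xs)" by (simp add: reduced_Cons)
  qed
qed

lemma reduced_append: "reduced (xs @ ys) \<longleftrightarrow> reduced xs \<and> reduced ys \<and>
   (xs \<noteq> [] \<longrightarrow> ys \<noteq> [] \<longrightarrow> hd ys \<noteq> linv (last xs))"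
proof (induction xs)
  case Nil then show ?case by simp
next
  case (Cons a xs)
  then show ?case by (cases xs) (auto simp: reduced_Cons)
qed

lemma reduced_take: "reduced w \<Longrightarrow> reduced (take k w)"
  by (metis append_take_drop_id reduced_append)

lemma reduce_Nil[simp]: "reduce [] = []" by (simp add: reduce_def)
lemma reduce_Cons: "reduce (a # w) = push a (reduce w)" by (simp add: reduce_def)
lemma reduce_append: "reduce (u @ v) = foldr push u (reduce v)" by (simp add: reduce_def)

lemma reduced_push: "reduced w \<Longrightarrow> reduced (push a w)"
  by (cases w) (auto simp: reduced_Cons reduced_tl)

lemma reduced_foldr_push: "reduced w \<Longrightarrow> reduced (foldr push u w)"
  by (induction u) (auto intro: reduced_push)

lemma reduced_reduce: "reduced (reduce w)"
  unfolding reduce_def by (rule reduced_foldr_push) simp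

lemma push_reduced: "reduced (a # w) \<Longrightarrow> push a w = a # w"
  by (cases w) (auto simp: reduced_Cons)

lemma reduce_reduced: "reduced w \<Longrightarrow> reduce w = w"
  by (induction w) (auto simp: reduce_Cons reduced_Cons push_reduced intro: push_reduced)

lemma push_push_inv: "reduced w \<Longrightarrow> push (linv a) (push a w) = w"
proof (cases w)
  case Nil then show ?thesis by simp
next
  case (Cons b w')
  assume r: "reduced w"
  show ?thesis
  proof (cases "b = linv a")
    case True
    then show ?thesis using r Cons by (cases w') (auto simp: reduced_Cons)
  next
    case False then show ?thesis using Cons by simp
  qed
qed

lemma foldr_push_push: "reduced r \<Longrightarrow> reduced w \<Longrightarrow>
  foldr push (push a r) w = push a (foldr push r w)"
proof (cases r)
  case Nil then show ?thesis by simp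
next
  case (Cons b r')
  assume rr: "reduced r" "reduced w"
  show ?thesis
  proof (cases "b = linv a")
    case True
    have "reduced (foldr push r' w)" using rr by (intro reduced_foldr_push)
    then have "push a (push (linv a) (foldr push r' w)) = foldr push r' w"
      using push_push_inv[of "foldr push r' w" "linv a"] by simp
    then show ?thesis using Cons True by simp
  next
    case False then show ?thesis using Cons by simp
  qed
qed

text \<open>Pushing a word onto a reduced word only depends on the free reduction of that word;
  this makes free reduction compatible with concatenation.\<close>
lemma foldr_push_reduce: "reduced w \<Longrightarrow> foldr push (reduce u) w = foldr push u w"
proof (induction u)
  case Nil then show ?case by simp
next
  case (Cons a u)
  have "foldr push (reduce (a # u)) w = foldr push (push a (reduce u)) w" by (simp add: reduce_Cons)
  also have "\<dots> = push a (foldr push (reduce u) w)"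
    using Cons.prems by (intro foldr_push_push reduced_reduce)
  finally show ?case using Cons by simp
qed

lemma reduce_append_reduce2: "reduce (u @ reduce v) = reduce (u @ v)"
  by (simp add: reduce_append reduce_reduced reduced_reduce)

lemma reduce_append_reduce1: "reduce (reduce u @ v) = reduce (u @ v)"
  by (simp add: reduce_append foldr_push_reduce reduced_reduce)

lemma ginv_ginv[simp]: "ginv (ginv u) = u"
  by (simp add: ginv_def rev_map comp_def)

lemma ginv_append: "ginv (u @ v) = ginv v @ ginv u"
  by (simp add: ginv_def)

lemma ginv_Cons: "ginv (a # u) = ginv u @ [linv a]"
  by (simp add: ginv_def)

lemma length_ginv[simp]: "length (ginv u) = length u"
  by (simp add: ginv_def)

lemma set_ginv: "set (ginv u) = linv ` set u"
  by (simp add: ginv_def)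

lemma foldr_push_cancel: "reduced w \<Longrightarrow> foldr push (ginv u) (foldr push u w) = w"
proof (induction u)
  case Nil then show ?case by (simp add: ginv_def)
next
  case (Cons a u)
  have "foldr push (ginv (a # u)) (foldr push (a # u) w)
      = foldr push (ginv u) (push (linv a) (push a (foldr push u w)))"
    by (simp add: ginv_Cons)
  also have "\<dots> = foldr push (ginv u) (foldr push u w)"
    using Cons.prems by (simp add: push_push_inv reduced_foldr_push)
  finally show ?case using Cons by simp
qed

lemma reduce_cancel: "reduce (ginv u @ u @ v) = reduce v"
proof -
  have "reduce (ginv u @ u @ v) = foldr push (ginv u) (foldr push u (reduce v))"
    by (simp add: reduce_append)
  also have "\<dots> = reduce v" by (simp add: foldr_push_cancel reduced_reduce)
  finally show ?thesis .
qed

lemma reduce_cancel': "reduce (u @ ginv u @ v) = reduce v"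
  using reduce_cancel[of "ginv u" v] by simp

lemma reduce_ginv_reduce: "reduce (ginv (reduce x) @ y) = reduce (ginv x @ y)"
proof -
  let ?r = "reduce x"
  have "reduce (ginv x @ y) = reduce (ginv ?r @ reduce (?r @ ginv x @ y))"
    by (simp add: reduce_append_reduce2 reduce_cancel)
  also have "reduce (?r @ ginv x @ y) = reduce y"
    by (simp add: reduce_append_reduce1 reduce_cancel')
  finally show ?thesis by (simp add: reduce_append_reduce2)
qed

lemma Xdist_gmul: "Xdist (gmul g u) (gmul g v) = Xdist u v"
proof -
  have "Xdist (gmul g u) (gmul g v) = length (reduce (ginv (reduce (g @ u)) @ reduce (g @ v)))"
    by (simp add: Xdist_def gmul_def)
  also have "reduce (ginv (reduce (g @ u)) @ reduce (g @ v)) = reduce (ginv (g @ u) @ g @ v)"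
    by (simp add: reduce_ginv_reduce reduce_append_reduce2)
  also have "\<dots> = reduce (ginv u @ v)"
    by (metis append_assoc ginv_append reduce_append_reduce2 reduce_cancel)
  finally show ?thesis by (simp add: Xdist_def gmul_def)
qed

lemma set_push: "set (push a w) \<subseteq> insert a (set w)"
  by (cases w) auto

lemma set_reduce: "set (reduce w) \<subseteq> set w"
  by (induction w) (auto simp: reduce_Cons dest: set_push[THEN subsetD])

lemma reduced_ginv: "reduced g \<Longrightarrow> reduced (ginv g)"
  unfolding reduced_nth
proof (intro allI impI)
  fix i assume r: "\<forall>i. Suc i < length g \<longrightarrow> g ! Suc i \<noteq> linv (g ! i)"
    and i: "Suc i < length (ginv g)"
  let ?n = "length g"
  have "ginv g ! Suc i = linv (g ! (?n - 2 - i))" "ginv g ! i = linv (g ! (?n - 1 - i))"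
    using i by (auto simp: ginv_def rev_nth numeral_2_eq_2)
  moreover have "g ! Suc (?n - 2 - i) \<noteq> linv (g ! (?n - 2 - i))"
    using r i by auto
  moreover have "Suc (?n - 2 - i) = ?n - 1 - i" using i by auto
  ultimately show "ginv g ! Suc i \<noteq> linv (ginv g ! i)"
    by (metis linv_linv)
qed

lemma FN_reduced: "g \<in> FN N \<Longrightarrow> reduced g"
  by (simp add: FN_def)

lemma FN_letters: "g \<in> FN N \<Longrightarrow> set g \<subseteq> letters N"
  by (simp add: FN_def)

lemma ginv_FN: "g \<in> FN N \<Longrightarrow> ginv g \<in> FN N"
  unfolding FN_def using reduced_ginv by (auto simp: set_ginv)

lemma gmul_FN: "set g \<subseteq> letters N \<Longrightarrow> u \<in> FN N \<Longrightarrow> gmul g u \<in> FN N"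
  unfolding FN_def gmul_def using set_reduce[of "g @ u"] by (auto simp: reduced_reduce)

lemma gmul_inv_gmul: "u \<in> FN N \<Longrightarrow> gmul (ginv g) (gmul g u) = u"
  unfolding gmul_def FN_def by (simp add: reduce_append_reduce2 reduce_cancel reduce_reduced)

lemma gmul_gmul_inv: "u \<in> FN N \<Longrightarrow> gmul g (gmul (ginv g) u) = u"
  using gmul_inv_gmul[of u N "ginv g"] by simp

text \<open>Length of the longest common prefix; it measures the Gromov product at 1.\<close>
fun lcp :: "'a list \<Rightarrow> 'a list \<Rightarrow> nat" where
  "lcp (a # u) (b # v) = (if a = b then Suc (lcp u v) else 0)"
| "lcp _ _ = 0"

lemma le_lcp_iff: "k \<le> lcp u v \<longleftrightarrow> k \<le> length u \<and> k \<le> length v \<and> take k u = take k v"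
proof (induction u v arbitrary: k rule: lcp.induct)
  case (1 a u b v)
  show ?case
  proof (cases k)
    case 0 then show ?thesis by simp
  next
    case (Suc j) then show ?thesis using "1.IH"[of j] by auto
  qed
qed auto

lemma nat_eq_by_le: "(\<And>k::nat. k \<le> a \<longleftrightarrow> k \<le> b) \<Longrightarrow> a = b"
  by (meson le_antisym order_refl)

lemma lcp_le: "lcp u v \<le> length u" "lcp u v \<le> length v"
  using le_lcp_iff[of "lcp u v" u v] by auto

lemma lcp_take: "take (lcp u v) u = take (lcp u v) v"
  using le_lcp_iff[of "lcp u v" u v] by auto

lemma lcp_ultra: "min (lcp x v) (lcp v y) \<le> lcp x y"
proof -
  let ?k = "min (lcp x v) (lcp v y)"
  have "?k \<le> lcp x v" "?k \<le> lcp v y" by auto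
  then show ?thesis unfolding le_lcp_iff by (metis min.absorb_iff1 take_take)
qed

lemma length_reduce_ginv_append: "reduced u \<Longrightarrow> reduced v \<Longrightarrow>
   length (reduce (ginv u @ v)) = length u + length v - 2 * lcp u v"
proof (induction u v rule: lcp.induct)
  case (1 a u b v)
  show ?case
  proof (cases "a = b")
    case True
    have "reduce (ginv (a # u) @ b # v) = reduce (ginv u @ (ginv [a] @ [a] @ v))"
      using True by (simp add: ginv_Cons ginv_def)
    also have "\<dots> = reduce (ginv u @ reduce (ginv [a] @ [a] @ v))"
      by (simp add: reduce_append_reduce2)
    also have "\<dots> = reduce (ginv u @ v)"
      by (simp only: reduce_cancel reduce_append_reduce2)
    finally show ?thesis using True 1 by (simp add: reduced_Cons)
  next
    case False
    have g: "reduced (ginv (a # u))" using 1(2) by (rule reduced_ginv)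
    have r: "reduced (ginv (a # u) @ b # v)"
      using g 1(3) False unfolding reduced_append
      by (auto simp: ginv_Cons)
    then show ?thesis using False by (simp add: reduce_reduced)
  qed
next
  case ("2_1" v) then show ?case by (simp add: ginv_def reduce_reduced)
next
  case ("2_2" u) then show ?case by (simp add: reduce_reduced reduced_ginv)
qed

lemma Xdist_formula: "reduced u \<Longrightarrow> reduced v \<Longrightarrow>
   Xdist u v = length u + length v - 2 * lcp u v"
  by (simp add: Xdist_def gmul_def length_reduce_ginv_append)

text \<open>A vertex v lying between x and y (d(x,v) + d(v,y) = d(x,y)) is an initial segment of x
  or of y and is at least as long as the common prefix of x and y: geodesics in the tree pass
  through the branch point.\<close>
lemma between_is_prefix:
  assumes "reduced x" "reduced v" "reduced y"
    and "Xdist x v + Xdist v y = Xdist x y"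
  shows "(v = take (length v) x \<or> v = take (length v) y) \<and> lcp x y \<le> length v"
proof -
  let ?a = "lcp x v" and ?b = "lcp v y" and ?c = "lcp x y"
  have e: "length x + length v - 2 * ?a + (length v + length y - 2 * ?b) = length x + length y - 2 * ?c"
    using assms by (simp add: Xdist_formula)
  have le: "?a \<le> length x" "?a \<le> length v" "?b \<le> length v" "?b \<le> length y" "?c \<le> length x" "?c \<le> length y"
    using lcp_le by auto
  have u: "min ?a ?b \<le> ?c" by (rule lcp_ultra)
  show ?thesis
  proof (cases "?b \<le> ?a")
    case True
    then have "?b \<le> ?c" using u by auto
    then have "?a = length v" "?c \<le> length v" using e le True by linarith+
    then have "v = take (length v) x"
      using lcp_take[of x v] by (metis take_all order_refl)
    then show ?thesis using \<open>?c \<le> length v\<close> by auto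
  next
    case False
    then have "?a \<le> ?c" using u by auto
    then have "?b = length v" "?c \<le> length v" using e le False by linarith+
    then have "v = take (length v) y"
      using lcp_take[of v y] by (metis take_all order_refl)
    then show ?thesis using \<open>?c \<le> length v\<close> by auto
  qed
qed

definition initial :: "nat \<Rightarrow> (nat \<Rightarrow> 'a) \<Rightarrow> 'a list" where
  "initial k \<xi> = map \<xi> [0..<k]"

lemma length_initial[simp]: "length (initial k \<xi>) = k"
  by (simp add: initial_def)

lemma take_initial[simp]: "take j (initial k \<xi>) = initial (min j k) \<xi>"
  by (cases "j \<le> k") (auto simp: initial_def take_map min_def)

lemma nth_initial[simp]: "i < k \<Longrightarrow> initial k \<xi> ! i = \<xi> i"
  by (simp add: initial_def)

lemma initial_eq_iff: "initial k \<xi> = initial k \<eta> \<longleftrightarrow> (\<forall>i<k. \<xi> i = \<eta> i)"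
  by (auto simp: initial_def map_eq_conv)

lemma initial_snoc: "initial (Suc n) \<xi> = initial n \<xi> @ [\<xi> n]"
  by (simp add: initial_def)

lemma initial_ext: "(\<And>k. initial k \<xi> = initial k \<eta>) \<Longrightarrow> \<xi> = \<eta>"
proof
  fix n assume "\<And>k. initial k \<xi> = initial k \<eta>"
  then have "initial (Suc n) \<xi> ! n = initial (Suc n) \<eta> ! n" by simp
  then show "\<xi> n = \<eta> n" by simp
qed

text \<open>The branch index of two boundary points: the length of their longest common prefix,
  i.e. the distance from 1 to the geodesic joining them.\<close>
definition branch :: "(nat \<Rightarrow> 'a) \<Rightarrow> (nat \<Rightarrow> 'a) \<Rightarrow> nat" where
  "branch \<xi> \<eta> = (LEAST n. \<xi> n \<noteq> \<eta> n)"

lemma branch_sym: "branch \<xi> \<eta> = branch \<eta> \<xi>"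
  unfolding branch_def by (simp add: eq_commute)

lemma initial_eq_branch: "\<xi> \<noteq> \<eta> \<Longrightarrow> initial k \<xi> = initial k \<eta> \<longleftrightarrow> k \<le> branch \<xi> \<eta>"
proof -
  assume "\<xi> \<noteq> \<eta>"
  then obtain n where n: "\<xi> n \<noteq> \<eta> n" by auto
  have d: "\<xi> (branch \<xi> \<eta>) \<noteq> \<eta> (branch \<xi> \<eta>)" unfolding branch_def by (rule LeastI[of _ n]) (rule n)
  have lt: "\<And>i. i < branch \<xi> \<eta> \<Longrightarrow> \<xi> i = \<eta> i" unfolding branch_def using not_less_Least by blast
  show ?thesis unfolding initial_eq_iff
  proof
    assume "\<forall>i<k. \<xi> i = \<eta> i"
    then show "k \<le> branch \<xi> \<eta>" using d by (cases "k \<le> branch \<xi> \<eta>") auto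
  next
    assume "k \<le> branch \<xi> \<eta>"
    then show "\<forall>i<k. \<xi> i = \<eta> i" using lt by auto
  qed
qed

lemma branch_0: "\<xi> 0 \<noteq> \<eta> 0 \<Longrightarrow> branch \<xi> \<eta> = 0"
  unfolding branch_def by (rule Least_eq_0)

lemma branch_0_iff: "\<xi> \<noteq> \<eta> \<Longrightarrow> branch \<xi> \<eta> = 0 \<Longrightarrow> \<xi> 0 \<noteq> \<eta> 0"
  using initial_eq_branch[of \<xi> \<eta> 1] by (simp add: initial_def)

lemma lcp_initial_same: "lcp (initial a \<xi>) (initial b \<xi>) = min a b"
  by (rule nat_eq_by_le) (auto simp: le_lcp_iff min_absorb1)

lemma lcp_initial_diff: "\<xi> \<noteq> \<eta> \<Longrightarrow> lcp (initial a \<xi>) (initial b \<eta>) = min a (min b (branch \<xi> \<eta>))"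
  by (rule nat_eq_by_le) (auto simp: le_lcp_iff min_absorb1 initial_eq_branch)

lemma initial_reduced: "\<xi> \<in> bdry N \<Longrightarrow> reduced (initial k \<xi>)"
  unfolding reduced_nth bdry_def by auto

lemma initial_FN: "\<xi> \<in> bdry N \<Longrightarrow> initial k \<xi> \<in> FN N"
  unfolding FN_def using initial_reduced[of \<xi> N k] by (auto simp: bdry_def initial_def)

lemma conv_to_initial:
  "conv_to \<gamma> F \<xi> \<longleftrightarrow> (\<forall>k. eventually (\<lambda>n. k \<le> length (\<gamma> n) \<and> take k (\<gamma> n) = initial k \<xi>) F)"
  by (simp add: conv_to_def initial_def)

section \<open>Combinatorial description of convex hulls\<close>

text \<open>The words on the geodesics between points of S: initial segments of some \<xi> \<in> S
  reaching at least up to the branch point of \<xi> with another point of S.\<close>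
definition hull_words :: "(nat \<Rightarrow> letter) set \<Rightarrow> letter list set" where
  "hull_words S = {v. \<exists>\<xi>\<in>S. \<exists>\<eta>\<in>S. \<xi> \<noteq> \<eta> \<and> branch \<xi> \<eta> \<le> length v \<and> v = initial (length v) \<xi>}"

lemma hull_wordsI:
  "\<xi> \<in> S \<Longrightarrow> \<eta> \<in> S \<Longrightarrow> \<xi> \<noteq> \<eta> \<Longrightarrow> branch \<xi> \<eta> \<le> length v \<Longrightarrow> v = initial (length v) \<xi>
    \<Longrightarrow> v \<in> hull_words S"
  unfolding hull_words_def by blast

lemma between_far_vertices:
  assumes red: "reduced x" "reduced v" "reduced y"
    and btw: "Xdist x v + Xdist v y = Xdist x y" and lv: "length v < M"
    and hx: "M \<le> length x" "take M x = initial M \<eta>"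
    and hy: "M \<le> length y" "take M y = initial M \<xi>"
  shows "\<xi> \<noteq> \<eta> \<and> branch \<xi> \<eta> \<le> length v \<and> (v = initial (length v) \<xi> \<or> v = initial (length v) \<eta>)"
proof -
  have tl: "(v = take (length v) x \<or> v = take (length v) y) \<and> lcp x y \<le> length v"
    using between_is_prefix[OF red btw] .
  have ne: "\<xi> \<noteq> \<eta>"
  proof
    assume "\<xi> = \<eta>"
    then have "M \<le> lcp x y" using hx hy by (auto simp: le_lcp_iff)
    then show False using tl lv by linarith
  qed
  have "branch \<xi> \<eta> \<le> length v"
  proof (rule ccontr)
    assume "\<not> branch \<xi> \<eta> \<le> length v"
    then have "Suc (lcp x y) \<le> branch \<xi> \<eta>" using tl by linarith
    moreover have "Suc (lcp x y) \<le> M" using tl lv by linarith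
    ultimately have "initial (Suc (lcp x y)) \<eta> = initial (Suc (lcp x y)) \<xi>"
      "take (Suc (lcp x y)) x = initial (Suc (lcp x y)) \<eta>"
      "take (Suc (lcp x y)) y = initial (Suc (lcp x y)) \<xi>"
      using initial_eq_branch[OF ne] hx(2) hy(2) take_take[of "Suc (lcp x y)" M]
      by (metis min.absorb1 take_initial)+
    then have "Suc (lcp x y) \<le> lcp x y"
      unfolding le_lcp_iff using \<open>Suc (lcp x y) \<le> M\<close> hx(1) hy(1) by simp
    then show False by simp
  qed
  moreover have "v = initial (length v) \<xi> \<or> v = initial (length v) \<eta>"
  proof (cases "v = take (length v) x")
    case True
    then show ?thesis using hx lv by (metis less_imp_le min.absorb1 take_initial take_take)
  next
    case False
    then have "v = take (length v) y" using tl by auto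
    then show ?thesis using hy lv by (metis less_imp_le min.absorb1 take_initial take_take)
  qed
  ultimately show ?thesis using ne by blast
qed

lemma Conv_sub_hull_words: "Conv N S \<subseteq> hull_words S"
proof
  fix v assume "v \<in> Conv N S"
  then obtain \<xi> \<eta> \<gamma> where \<xi>: "\<xi> \<in> S" and \<eta>: "\<eta> \<in> S" and g: "bi_geodesic N \<gamma>"
    and ct: "conv_to \<gamma> at_top \<xi>" and cb: "conv_to \<gamma> at_bot \<eta>" and v: "v \<in> range \<gamma>"
    unfolding Conv_def by blast
  obtain j where j: "v = \<gamma> j" using v by auto
  define M where "M = Suc (length v)"
  obtain N1 where N1: "\<And>n. n \<ge> N1 \<Longrightarrow> M \<le> length (\<gamma> n) \<and> take M (\<gamma> n) = initial M \<xi>"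
    using ct unfolding conv_to_initial eventually_at_top_linorder by blast
  obtain N2 where N2: "\<And>n. n \<le> N2 \<Longrightarrow> M \<le> length (\<gamma> n) \<and> take M (\<gamma> n) = initial M \<eta>"
    using cb unfolding conv_to_initial eventually_at_bot_linorder by blast
  define n where "n = max N1 j"
  define m where "m = min N2 j"
  have red: "\<And>k. reduced (\<gamma> k)" using g unfolding bi_geodesic_def FN_def by auto
  have gd: "\<And>a b. int (Xdist (\<gamma> a) (\<gamma> b)) = \<bar>a - b\<bar>" using g unfolding bi_geodesic_def by auto
  have "int (Xdist (\<gamma> m) v + Xdist v (\<gamma> n)) = int (Xdist (\<gamma> m) (\<gamma> n))"
    using gd[of m j] gd[of j n] gd[of m n] j by (auto simp: m_def n_def)
  then have btw: "Xdist (\<gamma> m) v + Xdist v (\<gamma> n) = Xdist (\<gamma> m) (\<gamma> n)" by linarith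
  have hm: "M \<le> length (\<gamma> m)" "take M (\<gamma> m) = initial M \<eta>" using N2[of m] by (auto simp: m_def)
  have hn: "M \<le> length (\<gamma> n)" "take M (\<gamma> n) = initial M \<xi>" using N1[of n] by (auto simp: n_def)
  have rv: "reduced v" using red j by simp
  have lv: "length v < M" by (simp add: M_def)
  have "\<xi> \<noteq> \<eta> \<and> branch \<xi> \<eta> \<le> length v \<and> (v = initial (length v) \<xi> \<or> v = initial (length v) \<eta>)"
    by (rule between_far_vertices[OF red[of m] rv red[of n] btw lv hm hn])
  then show "v \<in> hull_words S"
    using hull_wordsI[OF \<xi> \<eta>] hull_wordsI[OF \<eta> \<xi>] by (auto simp: branch_sym)
qed

text \<open>The bi-infinite geodesic from \<eta> to \<xi>, parametrised so that 0 is the branch point.\<close>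
definition branch_line :: "(nat \<Rightarrow> 'a) \<Rightarrow> (nat \<Rightarrow> 'a) \<Rightarrow> int \<Rightarrow> 'a list" where
  "branch_line \<xi> \<eta> n = (if 0 \<le> n then initial (branch \<xi> \<eta> + nat n) \<xi>
                                  else initial (branch \<xi> \<eta> + nat (- n)) \<eta>)"

lemma branch_line_geodesic:
  assumes bx: "\<xi> \<in> bdry N" "\<eta> \<in> bdry N" and ne: "\<xi> \<noteq> \<eta>"
  shows "bi_geodesic N (branch_line \<xi> \<eta>)"
    and "conv_to (branch_line \<xi> \<eta>) at_top \<xi>" and "conv_to (branch_line \<xi> \<eta>) at_bot \<eta>"
proof -
  let ?\<gamma> = "branch_line \<xi> \<eta>" and ?d = "branch \<xi> \<eta>"
  have lcpx: "\<And>a b. lcp (initial a \<xi>) (initial b \<eta>) = min a (min b ?d)"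
    using lcp_initial_diff[OF ne] by simp
  have lcpy: "\<And>a b. lcp (initial a \<eta>) (initial b \<xi>) = min a (min b ?d)"
    using lcp_initial_diff[OF ne[symmetric]] by (simp add: branch_sym)
  show "bi_geodesic N ?\<gamma>"
    unfolding bi_geodesic_def
  proof (intro conjI allI)
    fix n show "?\<gamma> n \<in> FN N" using bx by (simp add: branch_line_def initial_FN)
  next
    fix m n :: int
    show "int (Xdist (?\<gamma> m) (?\<gamma> n)) = \<bar>m - n\<bar>"
      using bx by (auto simp: branch_line_def Xdist_formula initial_reduced lcp_initial_same lcpx lcpy)
        (simp_all add: min_def)
  qed
  show "conv_to ?\<gamma> at_top \<xi>"
    unfolding conv_to_initial eventually_at_top_linorder
  proof
    fix k show "\<exists>N. \<forall>n\<ge>N. k \<le> length (?\<gamma> n) \<and> take k (?\<gamma> n) = initial k \<xi>"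
      by (rule exI[of _ "int k"]) (auto simp: branch_line_def min_absorb1)
  qed
  show "conv_to ?\<gamma> at_bot \<eta>"
    unfolding conv_to_initial eventually_at_bot_linorder
  proof
    fix k show "\<exists>N. \<forall>n\<le>N. k \<le> length (?\<gamma> n) \<and> take k (?\<gamma> n) = initial k \<eta>"
      by (rule exI[of _ "- int k - 1"]) (auto simp: branch_line_def min_absorb1)
  qed
qed

lemma hull_words_sub_Conv:
  assumes S: "S \<subseteq> bdry N" shows "hull_words S \<subseteq> Conv N S"
proof
  fix v assume "v \<in> hull_words S"
  then obtain \<xi> \<eta> where \<xi>: "\<xi> \<in> S" and \<eta>: "\<eta> \<in> S" and ne: "\<xi> \<noteq> \<eta>"
    and dv: "branch \<xi> \<eta> \<le> length v" and v: "v = initial (length v) \<xi>"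
    unfolding hull_words_def by blast
  have bx: "\<xi> \<in> bdry N" "\<eta> \<in> bdry N" using S \<xi> \<eta> by auto
  have "branch \<xi> \<eta> + nat (int (length v - branch \<xi> \<eta>)) = length v" using dv by simp
  then have "branch_line \<xi> \<eta> (int (length v - branch \<xi> \<eta>)) = v"
    using v by (simp add: branch_line_def del: of_nat_diff)
  then have "v \<in> range (branch_line \<xi> \<eta>)" by (metis rangeI)
  then show "v \<in> Conv N S" unfolding Conv_def using \<xi> \<eta> branch_line_geodesic[OF bx ne] by blast
qed

theorem Conv_eq: "S \<subseteq> bdry N \<Longrightarrow> Conv N S = hull_words S"
  using Conv_sub_hull_words hull_words_sub_Conv by blast

lemma Conv_sub_FN: "Conv N S \<subseteq> FN N"
  unfolding Conv_def bi_geodesic_def by auto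

section \<open>The action of F_N on the boundary\<close>

text \<open>Cancellation of a (reversed) word against the beginning of a finite word, mirroring the
  function cancel used in the definition of the boundary action.\<close>
fun cancel_word :: "letter list \<Rightarrow> letter list \<Rightarrow> letter list \<times> letter list" where
  "cancel_word [] w = ([], w)"
| "cancel_word (a # rs) [] = (a # rs, [])"
| "cancel_word (a # rs) (b # w) = (if b = linv a then cancel_word rs w else (a # rs, b # w))"

lemma reduce_cancel_word:
  "reduced g \<Longrightarrow> reduced w \<Longrightarrow>
   reduce (g @ w) = rev (fst (cancel_word (rev g) w)) @ snd (cancel_word (rev g) w)"
proof (induction g arbitrary: w rule: rev_induct)
  case Nil then show ?case by (simp add: reduce_reduced)
next
  case (snoc a g')
  have rg': "reduced g'" using snoc.prems(1) by (simp add: reduced_append)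
  have "reduce (g' @ [a] @ w) = reduce (g' @ reduce ([a] @ w))" by (simp add: reduce_append_reduce2)
  also have "reduce ([a] @ w) = push a w" using snoc.prems(2) by (simp add: reduce_Cons reduce_reduced)
  finally have eq: "reduce ((g' @ [a]) @ w) = reduce (g' @ push a w)" by simp
  show ?case
  proof (cases "w \<noteq> [] \<and> hd w = linv a")
    case True
    then obtain w' where w: "w = linv a # w'" by (cases w) auto
    have "push a w = w'" using w by simp
    moreover have "reduced w'" using snoc.prems(2) w by (simp add: reduced_Cons)
    ultimately show ?thesis using eq snoc.IH[OF rg'] w by simp
  next
    case False
    then have pa: "push a w = a # w" by (cases w) auto
    have "reduced (a # w)" using snoc.prems(2) False by (auto simp: reduced_Cons)
    moreover have "reduced (g' @ [a])" using snoc.prems(1) .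
    ultimately have "reduced (g' @ a # w)" unfolding reduced_append by (auto simp: reduced_Cons)
    then have "reduce (g' @ push a w) = g' @ a # w" using pa by (simp add: reduce_reduced)
    moreover have "cancel_word (rev (g' @ [a])) w = (a # rev g', w)"
      using False by (cases w) auto
    ultimately show ?thesis using eq by simp
  qed
qed

lemma cancel_cancel_word:
  "length rs0 < m \<Longrightarrow> m \<le> length w \<Longrightarrow> take m w = initial m \<xi> \<Longrightarrow>
   \<exists>c \<le> length rs0. cancel rs0 \<xi> = (fst (cancel_word rs0 w), (\<lambda>n. \<xi> (n + c)))
      \<and> snd (cancel_word rs0 w) = drop c w \<and> length (fst (cancel_word rs0 w)) + c = length rs0"
proof (induction rs0 arbitrary: \<xi> w m)
  case Nil then show ?case by auto
next
  case (Cons a rs)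
  obtain b w' where w: "w = b # w'" using Cons.prems by (cases w) auto
  obtain m' where m: "m = Suc m'" using Cons.prems by (cases m) auto
  have "b = take m w ! 0" using w m by simp
  also have "\<dots> = initial m \<xi> ! 0" using Cons.prems(3) by simp
  also have "\<dots> = \<xi> 0" using m by simp
  finally have b: "\<xi> 0 = b" by simp
  show ?case
  proof (cases "b = linv a")
    case True
    have t: "take m' w' = initial m' (\<lambda>n. \<xi> (Suc n))"
      using Cons.prems(3) w m by (simp add: initial_def upt_conv_Cons map_Suc_upt[symmetric] del: upt_Suc)
    obtain c where c: "c \<le> length rs" "cancel rs (\<lambda>n. \<xi> (Suc n)) = (fst (cancel_word rs w'), (\<lambda>n. \<xi> (Suc (n + c))))"
      "snd (cancel_word rs w') = drop c w'" "length (fst (cancel_word rs w')) + c = length rs"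
      using Cons.IH[of m' w' "\<lambda>n. \<xi> (Suc n)"] Cons.prems w m t by auto
    show ?thesis
      by (rule exI[of _ "Suc c"]) (use c True b w in auto)
  next
    case False
    show ?thesis by (rule exI[of _ 0]) (use False b w in auto)
  qed
qed

lemma bact_local:
  assumes g: "reduced g" and w: "reduced w" and m: "length g < m" "m \<le> length w"
    and t: "take m w = initial m \<xi>"
  shows "\<exists>u c. c \<le> length g \<and> length u + c = length g \<and> reduce (g @ w) = u @ drop c w
      \<and> bact g \<xi> = (\<lambda>n. if n < length u then u ! n else \<xi> (n - length u + c))"
proof -
  obtain c where c: "c \<le> length (rev g)" "cancel (rev g) \<xi> = (fst (cancel_word (rev g) w), (\<lambda>n. \<xi> (n + c)))"
      "snd (cancel_word (rev g) w) = drop c w" "length (fst (cancel_word (rev g) w)) + c = length (rev g)"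
    using cancel_cancel_word[of "rev g" m w \<xi>] m t by auto
  define u where "u = rev (fst (cancel_word (rev g) w))"
  have "reduce (g @ w) = u @ drop c w" using reduce_cancel_word[OF g w] c u_def by simp
  moreover have "bact g \<xi> = (\<lambda>n. if n < length u then u ! n else \<xi> (n - length u + c))"
    unfolding bact_def u_def using c(2) by (simp add: Let_def)
  ultimately show ?thesis using c by (intro exI[of _ u] exI[of _ c]) (auto simp: u_def)
qed

lemma bact_local_take:
  assumes g: "reduced g" and w: "reduced w" and m: "k + length g < m" "m \<le> length w"
    and t: "take m w = initial m \<xi>"
  shows "take k (reduce (g @ w)) = initial k (bact g \<xi>) \<and> k \<le> length (reduce (g @ w))"
proof -
  obtain u c where uc: "c \<le> length g" "length u + c = length g" "reduce (g @ w) = u @ drop c w"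
      "bact g \<xi> = (\<lambda>n. if n < length u then u ! n else \<xi> (n - length u + c))"
    using bact_local[OF g w _ m(2) t] m by auto
  have len: "k \<le> length (u @ drop c w)" using uc m by auto
  have "take k (u @ drop c w) = initial k (bact g \<xi>)"
  proof (rule nth_equalityI)
    show "length (take k (u @ drop c w)) = length (initial k (bact g \<xi>))" using len by simp
  next
    fix i assume i: "i < length (take k (u @ drop c w))"
    then have ik: "i < k" by simp
    show "take k (u @ drop c w) ! i = initial k (bact g \<xi>) ! i"
    proof (cases "i < length u")
      case True then show ?thesis using ik uc by (simp add: nth_append)
    next
      case False
      have "w ! (c + (i - length u)) = take m w ! (c + (i - length u))"
        using ik uc m False by (simp)
      also have "\<dots> = \<xi> (c + (i - length u))" using t ik uc m False by simp
      finally show ?thesis using ik uc m False len by (simp add: nth_append add.commute)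
    qed
  qed
  then show ?thesis using uc len by simp
qed

lemma initial_bact:
  assumes g: "g \<in> FN N" and \<xi>: "\<xi> \<in> bdry N" and m: "k + length g < m"
  shows "initial k (bact g \<xi>) = take k (reduce (g @ initial m \<xi>))"
  using bact_local_take[OF FN_reduced[OF g] initial_reduced[OF \<xi>], of k m] m by simp

lemma bact_bdry:
  assumes g: "g \<in> FN N" and \<xi>: "\<xi> \<in> bdry N"
  shows "bact g \<xi> \<in> bdry N"
proof -
  let ?\<zeta> = "bact g \<xi>"
  have P: "\<And>k. initial k ?\<zeta> \<in> FN N"
  proof -
    fix k
    have e: "initial k ?\<zeta> = take k (reduce (g @ initial (k + length g + 1) \<xi>))"
      by (rule initial_bact[OF g \<xi>]) simp
    have "reduce (g @ initial (k + length g + 1) \<xi>) \<in> FN N"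
      using gmul_FN[OF FN_letters[OF g] initial_FN[OF \<xi>]] by (simp add: gmul_def)
    then show "initial k ?\<zeta> \<in> FN N" unfolding e FN_def
      by (auto simp: reduced_take dest: in_set_takeD)
  qed
  show ?thesis unfolding bdry_def
  proof (intro CollectI conjI allI)
    fix n
    have "?\<zeta> n \<in> set (initial (Suc n) ?\<zeta>)" by (simp add: initial_def)
    then show "?\<zeta> n \<in> letters N" using P[of "Suc n"] by (auto simp: FN_def)
  next
    fix n
    have "reduced (initial (Suc (Suc n)) ?\<zeta>)" using P by (simp add: FN_def)
    then show "?\<zeta> (Suc n) \<noteq> linv (?\<zeta> n)" unfolding reduced_nth by auto
  qed
qed

lemma bact_inv:
  assumes g: "g \<in> FN N" and \<xi>: "\<xi> \<in> bdry N"
  shows "bact (ginv g) (bact g \<xi>) = \<xi>"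
proof (rule initial_ext)
  fix k
  let ?\<zeta> = "bact g \<xi>"
  define m where "m = k + 2 * length g + 2"
  define w where "w = initial m \<xi>"
  define z where "z = reduce (g @ w)"
  define k' where "k' = k + length g + 1"
  have rw: "reduced w" using initial_reduced[OF \<xi>] by (simp add: w_def)
  have zz: "take k' z = initial k' ?\<zeta> \<and> k' \<le> length z"
    using bact_local_take[OF FN_reduced[OF g] rw, of k' m \<xi>] by (simp add: z_def w_def m_def k'_def)
  have rz: "reduced z" by (simp add: z_def reduced_reduce)
  have rgi: "reduced (ginv g)" using FN_reduced[OF g] by (rule reduced_ginv)
  have "take k (reduce (ginv g @ z)) = initial k (bact (ginv g) ?\<zeta>)"
    using bact_local_take[OF rgi rz, of k k' ?\<zeta>] zz by (simp add: k'_def)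
  moreover have "reduce (ginv g @ z) = w"
    unfolding z_def by (simp add: reduce_append_reduce2 reduce_cancel reduce_reduced rw)
  ultimately show "initial k (bact (ginv g) ?\<zeta>) = initial k \<xi>" by (simp add: w_def m_def)
qed

lemma bact_inv': "g \<in> FN N \<Longrightarrow> \<xi> \<in> bdry N \<Longrightarrow> bact g (bact (ginv g) \<xi>) = \<xi>"
  using bact_inv[of "ginv g" N \<xi>] by (simp add: ginv_FN)

lemma bact_initial_local:
  assumes g: "g \<in> FN N" and \<xi>: "\<xi> \<in> bdry N" and \<eta>: "\<eta> \<in> bdry N"
    and m: "k + length g < m" and e: "initial m \<xi> = initial m \<eta>"
  shows "initial k (bact g \<xi>) = initial k (bact g \<eta>)"
  using initial_bact[OF g \<xi> m] initial_bact[OF g \<eta> m] e by simp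

lemma bact_conv_to:
  assumes g: "g \<in> FN N" and \<gamma>: "\<And>n. \<gamma> n \<in> FN N" and c: "conv_to \<gamma> F \<xi>"
  shows "conv_to (\<lambda>n. gmul g (\<gamma> n)) F (bact g \<xi>)"
  unfolding conv_to_initial
proof
  fix k
  let ?k = "k + length g + 1"
  have ev: "eventually (\<lambda>n. ?k \<le> length (\<gamma> n) \<and> take ?k (\<gamma> n) = initial ?k \<xi>) F"
    using c unfolding conv_to_initial by blast
  show "eventually (\<lambda>n. k \<le> length (gmul g (\<gamma> n)) \<and> take k (gmul g (\<gamma> n)) = initial k (bact g \<xi>)) F"
  proof (rule eventually_mono[OF ev])
    fix n assume h: "?k \<le> length (\<gamma> n) \<and> take ?k (\<gamma> n) = initial ?k \<xi>"
    show "k \<le> length (gmul g (\<gamma> n)) \<and> take k (gmul g (\<gamma> n)) = initial k (bact g \<xi>)"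
      using bact_local_take[OF FN_reduced[OF g] FN_reduced[OF \<gamma>], of k ?k n \<xi>] h
      by (simp add: gmul_def)
  qed
qed

lemma Conv_equiv_sub:
  assumes g: "g \<in> FN N"
  shows "gmul g ` Conv N S \<subseteq> Conv N (bact g ` S)"
proof
  fix v assume "v \<in> gmul g ` Conv N S"
  then obtain v0 where v: "v = gmul g v0" and v0: "v0 \<in> Conv N S" by auto
  then obtain \<xi> \<eta> \<gamma> where \<xi>: "\<xi> \<in> S" and \<eta>: "\<eta> \<in> S" and geo: "bi_geodesic N \<gamma>"
    and ct: "conv_to \<gamma> at_top \<xi>" and cb: "conv_to \<gamma> at_bot \<eta>" and r: "v0 \<in> range \<gamma>"
    unfolding Conv_def by blast
  have gF: "\<And>n. \<gamma> n \<in> FN N" using geo by (simp add: bi_geodesic_def)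
  have geo': "bi_geodesic N (\<lambda>n. gmul g (\<gamma> n))"
    using geo unfolding bi_geodesic_def
    by (auto simp: Xdist_gmul intro: gmul_FN[OF FN_letters[OF g]])
  show "v \<in> Conv N (bact g ` S)"
    unfolding Conv_def
    using \<xi> \<eta> geo' bact_conv_to[OF g gF ct] bact_conv_to[OF g gF cb] r v by blast
qed

lemma Conv_equiv:
  assumes g: "g \<in> FN N" and S: "S \<subseteq> bdry N"
  shows "Conv N (bact g ` S) = gmul g ` Conv N S"
proof
  show "gmul g ` Conv N S \<subseteq> Conv N (bact g ` S)" by (rule Conv_equiv_sub[OF g])
next
  have "gmul (ginv g) ` Conv N (bact g ` S) \<subseteq> Conv N (bact (ginv g) ` bact g ` S)"
    by (rule Conv_equiv_sub[OF ginv_FN[OF g]])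
  also have "bact (ginv g) ` bact g ` S = S"
    using bact_inv[OF g] S by (force simp: image_image)
  finally have h: "gmul (ginv g) ` Conv N (bact g ` S) \<subseteq> Conv N S" .
  show "Conv N (bact g ` S) \<subseteq> gmul g ` Conv N S"
  proof
    fix v assume v: "v \<in> Conv N (bact g ` S)"
    then have "v \<in> FN N" using Conv_sub_FN by auto
    then have "v = gmul g (gmul (ginv g) v)" by (simp add: gmul_gmul_inv)
    then show "v \<in> gmul g ` Conv N S" using h v by auto
  qed
qed
section \<open>Topology of the boundary\<close>

text \<open>The boundary is a closed subspace of the compact space of all letter sequences.\<close>
abbreviation seq_top :: "nat \<Rightarrow> (nat \<Rightarrow> letter) topology" where
  "seq_top N \<equiv> product_topology (\<lambda>_. discrete_topology (letters N)) UNIV"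

lemma topspace_seq_top: "topspace (seq_top N) = {\<xi>. \<forall>i. \<xi> i \<in> letters N}"
  by (auto simp: topspace_product_topology PiE_iff)

lemma bdry_sub_seq_top: "bdry N \<subseteq> topspace (seq_top N)"
  by (auto simp: topspace_seq_top bdry_def)

lemma topspace_bdry_top[simp]: "topspace (bdry_top N) = bdry N"
  using bdry_sub_seq_top[of N] by (auto simp: bdry_top_def)

lemma finite_letters: "finite (letters N)"
proof -
  have "letters N \<subseteq> {..<N} \<times> UNIV" by (auto simp: letters_def)
  then show ?thesis by (rule finite_subset) auto
qed

lemma coord_clopen_seq_top:
  "openin (seq_top N) {\<xi> \<in> topspace (seq_top N). \<xi> i \<in> Q}
   \<and> closedin (seq_top N) {\<xi> \<in> topspace (seq_top N). \<xi> i \<in> Q}"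
proof -
  have proj: "continuous_map (seq_top N) (discrete_topology (letters N)) (\<lambda>\<xi>. \<xi> i)"
    using continuous_map_product_projection[of i UNIV "\<lambda>_. discrete_topology (letters N)"] by simp
  have eq: "{\<xi> \<in> topspace (seq_top N). \<xi> i \<in> Q} = {\<xi> \<in> topspace (seq_top N). \<xi> i \<in> Q \<inter> letters N}"
    by (auto simp: topspace_seq_top)
  have "openin (seq_top N) {\<xi> \<in> topspace (seq_top N). \<xi> i \<in> Q \<inter> letters N}"
    by (rule openin_continuous_map_preimage[OF proj]) simp
  moreover have "closedin (seq_top N) {\<xi> \<in> topspace (seq_top N). \<xi> i \<in> Q \<inter> letters N}"
    by (rule closedin_continuous_map_preimage[OF proj]) simp
  ultimately show ?thesis unfolding eq by (rule conjI)
qed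

lemma coord_clopen:
  "openin (bdry_top N) {\<xi> \<in> bdry N. \<xi> i \<in> Q} \<and> closedin (bdry_top N) {\<xi> \<in> bdry N. \<xi> i \<in> Q}"
proof -
  have eq: "{\<xi> \<in> bdry N. \<xi> i \<in> Q} = {\<xi> \<in> topspace (seq_top N). \<xi> i \<in> Q} \<inter> bdry N"
    using bdry_sub_seq_top by auto
  have "openin (bdry_top N) ({\<xi> \<in> topspace (seq_top N). \<xi> i \<in> Q} \<inter> bdry N)"
    unfolding bdry_top_def by (rule openin_subtopology_Int) (rule conjunct1[OF coord_clopen_seq_top])
  moreover have "closedin (bdry_top N) ({\<xi> \<in> topspace (seq_top N). \<xi> i \<in> Q} \<inter> bdry N)"
    unfolding bdry_top_def closedin_subtopology using conjunct2[OF coord_clopen_seq_top] by blast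
  ultimately show ?thesis unfolding eq by (rule conjI)
qed

lemma bdry_closed_seq_top: "closedin (seq_top N) (bdry N)"
proof -
  define F where "F n = (\<Union>a\<in>letters N. {\<xi> \<in> topspace (seq_top N). \<xi> n \<in> {a}}
          \<inter> {\<xi> \<in> topspace (seq_top N). \<xi> (Suc n) \<in> - {linv a}})" for n
  have cF: "closedin (seq_top N) (F n)" for n
  proof -
    have "closedin (seq_top N) ({\<xi> \<in> topspace (seq_top N). \<xi> n \<in> {a}}
          \<inter> {\<xi> \<in> topspace (seq_top N). \<xi> (Suc n) \<in> - {linv a}})" for a
      using closedin_Int[OF conjunct2[OF coord_clopen_seq_top] conjunct2[OF coord_clopen_seq_top]] .
    then show ?thesis unfolding F_def using finite_letters[of N]
      by (intro closedin_Union) auto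
  qed
  have "bdry N = topspace (seq_top N) \<inter> (\<Inter>n. F n)"
    by (auto simp: F_def bdry_def topspace_seq_top)
  moreover have "closedin (seq_top N) (\<Inter>n. F n)" using cF by (intro closedin_Inter) auto
  ultimately show ?thesis using closedin_topspace[of "seq_top N"] by (metis closedin_Int)
qed

lemma compact_bdry_top: "compact_space (bdry_top N)"
proof -
  have "compact_space (seq_top N)"
    by (simp add: compact_space_product_topology compact_space_discrete_topology finite_letters)
  then have "compactin (seq_top N) (bdry N)" using bdry_closed_seq_top closedin_compact_space by blast
  then show ?thesis unfolding bdry_top_def by (rule compact_space_subtopology)
qed

lemma closed_compact: "closedin (bdry_top N) K \<Longrightarrow> compactin (bdry_top N) K"
  using compact_bdry_top closedin_compact_space by blast

definition cylinder :: "nat \<Rightarrow> letter list \<Rightarrow> (nat \<Rightarrow> letter) set" where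
  "cylinder N p = {\<xi> \<in> bdry N. initial (length p) \<xi> = p}"

lemma cylinder_clopen: "openin (bdry_top N) (cylinder N p) \<and> closedin (bdry_top N) (cylinder N p)"
proof (induction p rule: rev_induct)
  case Nil
  have "cylinder N [] = topspace (bdry_top N)" by (simp add: cylinder_def initial_def)
  then show ?case by (metis openin_topspace closedin_topspace)
next
  case (snoc a p)
  have eq: "cylinder N (p @ [a]) = cylinder N p \<inter> {\<xi> \<in> bdry N. \<xi> (length p) \<in> {a}}"
    by (auto simp: cylinder_def initial_snoc)
  have c: "openin (bdry_top N) {\<xi> \<in> bdry N. \<xi> (length p) \<in> {a}}"
    "closedin (bdry_top N) {\<xi> \<in> bdry N. \<xi> (length p) \<in> {a}}"
    using coord_clopen by blast+
  show ?case unfolding eq using openin_Int[OF _ c(1)] closedin_Int[OF _ c(2)] snoc by blast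
qed

lemma cylinder_open: "openin (bdry_top N) (cylinder N p)"
  using cylinder_clopen by blast

lemma cylinder_closed: "closedin (bdry_top N) (cylinder N p)"
  using cylinder_clopen by blast

lemma in_cylinder_initial: "\<xi> \<in> bdry N \<Longrightarrow> \<xi> \<in> cylinder N (initial m \<xi>)"
  by (simp add: cylinder_def)

lemma openin_by_cylinder:
  assumes U: "U \<subseteq> bdry N" and h: "\<And>\<xi>. \<xi> \<in> U \<Longrightarrow> \<exists>m. cylinder N (initial m \<xi>) \<subseteq> U"
  shows "openin (bdry_top N) U"
proof (subst openin_subopen, intro ballI)
  fix \<xi> assume x: "\<xi> \<in> U"
  then obtain m where m: "cylinder N (initial m \<xi>) \<subseteq> U" using h by blast
  have "\<xi> \<in> cylinder N (initial m \<xi>)" using x U by (intro in_cylinder_initial) auto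
  then show "\<exists>T. openin (bdry_top N) T \<and> \<xi> \<in> T \<and> T \<subseteq> U"
    using cylinder_open[of N "initial m \<xi>"] m by blast
qed

text \<open>Each element of F_N acts by a homeomorphism; by locality, every coordinate of g \<xi>
  depends only on a finite initial segment of \<xi>.\<close>
lemma bact_cont:
  assumes g: "g \<in> FN N"
  shows "continuous_map (bdry_top N) (bdry_top N) (bact g)"
proof -
  have comp: "continuous_map (bdry_top N) (discrete_topology (letters N)) (\<lambda>\<xi>. bact g \<xi> k)" for k
    unfolding continuous_map_def
  proof (intro conjI allI impI)
    show "(\<lambda>\<xi>. bact g \<xi> k) \<in> topspace (bdry_top N) \<rightarrow> topspace (discrete_topology (letters N))"
      using bact_bdry[OF g] by (auto simp: bdry_def)
  next
    fix Q assume "openin (discrete_topology (letters N)) Q"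
    show "openin (bdry_top N) {x \<in> topspace (bdry_top N). bact g x k \<in> Q}"
    proof (rule openin_by_cylinder)
      show "{x \<in> topspace (bdry_top N). bact g x k \<in> Q} \<subseteq> bdry N" by auto
    next
      fix \<xi> assume x: "\<xi> \<in> {x \<in> topspace (bdry_top N). bact g x k \<in> Q}"
      let ?m = "Suc k + length g + 1"
      have "cylinder N (initial ?m \<xi>) \<subseteq> {x \<in> topspace (bdry_top N). bact g x k \<in> Q}"
      proof
        fix \<zeta> assume z: "\<zeta> \<in> cylinder N (initial ?m \<xi>)"
        then have zb: "\<zeta> \<in> bdry N" "initial ?m \<zeta> = initial ?m \<xi>" by (auto simp: cylinder_def)
        have "initial (Suc k) (bact g \<zeta>) = initial (Suc k) (bact g \<xi>)"
          using bact_initial_local[OF g zb(1), of \<xi> "Suc k" ?m] zb x by auto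
        then have "bact g \<zeta> k = bact g \<xi> k" by (metis lessI nth_initial)
        then show "\<zeta> \<in> {x \<in> topspace (bdry_top N). bact g x k \<in> Q}" using x zb by auto
      qed
      then show "\<exists>m. cylinder N (initial m \<xi>) \<subseteq> {x \<in> topspace (bdry_top N). bact g x k \<in> Q}" by blast
    qed
  qed
  have "continuous_map (bdry_top N) (seq_top N) (bact g)"
    by (simp add: continuous_map_componentwise_UNIV comp)
  moreover have "bact g ` topspace (bdry_top N) \<subseteq> bdry N" using bact_bdry[OF g] by auto
  ultimately have "continuous_map (bdry_top N) (subtopology (seq_top N) (bdry N)) (bact g)"
    by (auto simp: continuous_map_in_subtopology)
  then show ?thesis unfolding bdry_top_def .
qed

lemma closedin_bdry_sub: "closedin (bdry_top N) S \<Longrightarrow> S \<subseteq> bdry N"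
  using closedin_subset[of "bdry_top N" S] by simp

lemma bact_image_eq:
  assumes g: "g \<in> FN N" and S: "S \<subseteq> bdry N"
  shows "bact g ` S = {\<zeta> \<in> bdry N. bact (ginv g) \<zeta> \<in> S}"
proof
  show "bact g ` S \<subseteq> {\<zeta> \<in> bdry N. bact (ginv g) \<zeta> \<in> S}"
    using S bact_bdry[OF g] bact_inv[OF g] by auto
next
  show "{\<zeta> \<in> bdry N. bact (ginv g) \<zeta> \<in> S} \<subseteq> bact g ` S"
  proof
    fix \<zeta> assume z: "\<zeta> \<in> {\<zeta> \<in> bdry N. bact (ginv g) \<zeta> \<in> S}"
    then have "\<zeta> = bact g (bact (ginv g) \<zeta>)" using bact_inv'[OF g] by auto
    then show "\<zeta> \<in> bact g ` S" using z by blast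
  qed
qed

lemma bact_image_closed:
  assumes g: "g \<in> FN N" and S: "closedin (bdry_top N) S"
  shows "closedin (bdry_top N) (bact g ` S)"
proof -
  have "closedin (bdry_top N) {x \<in> topspace (bdry_top N). bact (ginv g) x \<in> S}"
    by (rule closedin_continuous_map_preimage[OF bact_cont[OF ginv_FN[OF g]] S])
  then show ?thesis using bact_image_eq[OF g closedin_bdry_sub[OF S]] by simp
qed

lemma CN_sub: "S \<in> CN N \<Longrightarrow> S \<subseteq> bdry N"
  by (auto simp: CN_def dest: closedin_bdry_sub)

lemma bact_CN:
  assumes g: "g \<in> FN N" and S: "S \<in> CN N"
  shows "bact g ` S \<in> CN N"
proof -
  have c: "closedin (bdry_top N) (bact g ` S)" using S bact_image_closed[OF g] by (auto simp: CN_def)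
  obtain x y where xy: "x \<in> S" "y \<in> S" "x \<noteq> y" using S by (auto simp: CN_def)
  have "bact g x \<noteq> bact g y"
  proof
    assume "bact g x = bact g y"
    then have "bact (ginv g) (bact g x) = bact (ginv g) (bact g y)" by simp
    then show False using bact_inv[OF g, of x] bact_inv[OF g, of y] CN_sub[OF S] xy by (metis subsetD)
  qed
  then show ?thesis using c xy unfolding CN_def by blast
qed

text \<open>The subspace topology induced on U by the topology generated by B is the topology with
  subbase B relativised to U; this is the form required by the Alexander subbase theorem.\<close>
lemma generated_open_relative_to:
  assumes "generate_topology_on B T"
  shows "openin (topology (arbitrary union_of (finite intersection_of (\<lambda>x. x \<in> B) relative_to U))) (T \<inter> U)"
    (is "openin ?Y _")
  using assms
proof (induction rule: generate_topology_on.induct)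
  case Empty then show ?case by simp
next
  case (Int a b)
  have "a \<inter> b \<inter> U = (a \<inter> U) \<inter> (b \<inter> U)" by auto
  then show ?case using openin_Int[OF Int.IH] by simp
next
  case (UN K)
  have "\<Union>K \<inter> U = \<Union> ((\<lambda>k. k \<inter> U) ` K)" by auto
  moreover have "openin ?Y (\<Union> ((\<lambda>k. k \<inter> U) ` K))"
    by (rule openin_Union) (use UN in auto)
  ultimately show ?case by simp
next
  case (Basis s)
  have "(finite intersection_of (\<lambda>x. x \<in> B) relative_to U) (U \<inter> s)"
    by (rule relative_to_inc, rule finite_intersection_of_inc) (rule Basis)
  then show ?case by (simp add: openin_subbase Int_commute arbitrary_union_of_inc)
qed

lemma relative_subbase_open_generated:
  assumes U: "U \<subseteq> \<Union>B"
    and c: "(finite intersection_of (\<lambda>x. x \<in> B) relative_to U) c"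
  shows "openin (subtopology (topology_generated_by B) U) c"
proof -
  obtain F where F: "finite F" "F \<subseteq> B" "c = U \<inter> \<Inter>F"
    using c unfolding relative_to_def intersection_of_def by auto
  show ?thesis
  proof (cases "F = {}")
    case True
    have "openin (topology_generated_by B) (\<Union>B)"
      using openin_topspace[of "topology_generated_by B"] by simp
    moreover have "c = \<Union>B \<inter> U" using True F U by auto
    ultimately show ?thesis unfolding openin_subtopology by blast
  next
    case False
    have "generate_topology_on B (\<Inter>F)"
      using F False by (intro generate_topology_on_Inter) (auto intro: generate_topology_on.Basis)
    then have "openin (topology_generated_by B) (\<Inter>F)"
      by (simp add: openin_topology_generated_by_iff)
    moreover have "c = \<Inter>F \<inter> U" using F by auto
    ultimately show ?thesis unfolding openin_subtopology by blast
  qed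
qed

lemma subtopology_generated_by:
  assumes U: "U \<subseteq> \<Union>B"
  shows "subtopology (topology_generated_by B) U
       = topology (arbitrary union_of (finite intersection_of (\<lambda>x. x \<in> B) relative_to U))"
    (is "?L = ?Y")
proof (subst topology_eq, intro allI iffI)
  fix S assume "openin ?L S"
  then obtain T where T: "openin (topology_generated_by B) T" and S: "S = T \<inter> U"
    unfolding openin_subtopology by blast
  then show "openin ?Y S"
    using generated_open_relative_to[of B T U] by (simp add: openin_topology_generated_by_iff)
next
  fix S assume "openin ?Y S"
  then have "(arbitrary union_of (finite intersection_of (\<lambda>x. x \<in> B) relative_to U)) S"
    by (simp add: openin_subbase)
  then obtain \<U> where "\<And>c. c \<in> \<U> \<Longrightarrow> (finite intersection_of (\<lambda>x. x \<in> B) relative_to U) c"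
    and S: "\<Union>\<U> = S"
    unfolding union_of_def by auto
  then have "openin ?L (\<Union>\<U>)"
    by (intro openin_Union relative_subbase_open_generated[OF U])
  then show "openin ?L S" using S by simp
qed

section \<open>The Vietoris topology on C_N and pattern sets\<close>

definition inside_set :: "'a topology \<Rightarrow> 'a set \<Rightarrow> 'a set set" where
  "inside_set X U = {K. closedin X K \<and> K \<subseteq> U}"

definition hit_set :: "'a topology \<Rightarrow> 'a set \<Rightarrow> 'a set set" where
  "hit_set X U = {K. closedin X K \<and> K \<inter> U \<noteq> {}}"

definition vietoris_subbase :: "'a topology \<Rightarrow> 'a set set set" where
  "vietoris_subbase X = {inside_set X U | U. openin X U} \<union> {hit_set X U | U. openin X U}"

lemma vietoris_eq: "vietoris X = subtopology (topology_generated_by (vietoris_subbase X)) {K. closedin X K}"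
  by (simp add: vietoris_def vietoris_subbase_def inside_set_def hit_set_def)

lemma CN_closed: "S \<in> CN N \<Longrightarrow> closedin (bdry_top N) S"
  by (simp add: CN_def)

lemma CN_top_eq: "CN_top N = subtopology (topology_generated_by (vietoris_subbase (bdry_top N))) (CN N)"
proof -
  have "{K. closedin (bdry_top N) K} \<inter> CN N = CN N" using CN_closed by auto
  then show ?thesis unfolding CN_top_def vietoris_eq subtopology_subtopology by simp
qed

lemma CN_sub_vietoris_subbase: "CN N \<subseteq> \<Union> (vietoris_subbase (bdry_top N))"
proof
  fix S assume S: "S \<in> CN N"
  have "S \<in> inside_set (bdry_top N) (topspace (bdry_top N))"
    using CN_closed[OF S] closedin_bdry_sub[of N S] by (auto simp: inside_set_def)
  moreover have "inside_set (bdry_top N) (topspace (bdry_top N)) \<in> vietoris_subbase (bdry_top N)"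
    unfolding vietoris_subbase_def by blast
  ultimately show "S \<in> \<Union> (vietoris_subbase (bdry_top N))" by blast
qed

lemma topspace_CN_top[simp]: "topspace (CN_top N) = CN N"
  unfolding CN_top_eq using CN_sub_vietoris_subbase by auto

lemma openin_CN_basic:
  assumes "finite F" "F \<noteq> {}" "F \<subseteq> vietoris_subbase (bdry_top N)"
  shows "openin (CN_top N) (CN N \<inter> \<Inter>F)"
proof -
  have "generate_topology_on (vietoris_subbase (bdry_top N)) (\<Inter>F)"
    using assms by (intro generate_topology_on_Inter) (auto intro: generate_topology_on.Basis)
  then have "openin (topology_generated_by (vietoris_subbase (bdry_top N))) (\<Inter>F)"
    by (simp add: openin_topology_generated_by_iff)
  then show ?thesis unfolding CN_top_eq openin_subtopology by blast
qed

text \<open>Words of length L, and the pattern sets: the elements of C_N whose set of initial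
  segments of length L is exactly A.  For fixed L they partition C_N into finitely many
  clopen pieces.\<close>
definition words :: "nat \<Rightarrow> nat \<Rightarrow> letter list set" where
  "words N L = {w. length w = L \<and> set w \<subseteq> letters N}"

lemma finite_words: "finite (words N L)"
proof -
  have "finite {xs. set xs \<subseteq> letters N \<and> length xs = L}"
    by (rule finite_lists_length_eq[OF finite_letters])
  then show ?thesis unfolding words_def by (simp add: conj_commute)
qed

lemma initial_in_words: "\<xi> \<in> bdry N \<Longrightarrow> initial L \<xi> \<in> words N L"
  by (auto simp: words_def bdry_def initial_def)

definition pattern :: "nat \<Rightarrow> nat \<Rightarrow> letter list set \<Rightarrow> (nat \<Rightarrow> letter) set set" where
  "pattern N L A = {S \<in> CN N. initial L ` S = A}"

lemma in_cylinder_iff: "p \<in> words N L \<Longrightarrow> \<xi> \<in> cylinder N p \<longleftrightarrow> \<xi> \<in> bdry N \<and> initial L \<xi> = p"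
  by (auto simp: cylinder_def words_def)

lemma pattern_iff:
  assumes A: "A \<subseteq> words N L"
  shows "S \<in> pattern N L A \<longleftrightarrow> S \<in> CN N \<and> S \<subseteq> \<Union> (cylinder N ` A) \<and> (\<forall>p\<in>A. S \<inter> cylinder N p \<noteq> {})"
proof (cases "S \<in> CN N")
  case True
  then have S: "S \<subseteq> bdry N" by (rule CN_sub)
  have cyl: "\<And>\<xi> p. p \<in> A \<Longrightarrow> \<xi> \<in> cylinder N p \<longleftrightarrow> \<xi> \<in> bdry N \<and> initial L \<xi> = p"
    using A in_cylinder_iff by blast
  have "initial L ` S = A \<longleftrightarrow> S \<subseteq> \<Union> (cylinder N ` A) \<and> (\<forall>p\<in>A. S \<inter> cylinder N p \<noteq> {})"
  proof
    assume e: "initial L ` S = A"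
    show "S \<subseteq> \<Union> (cylinder N ` A) \<and> (\<forall>p\<in>A. S \<inter> cylinder N p \<noteq> {})"
      using S cyl e by blast
  next
    assume h: "S \<subseteq> \<Union> (cylinder N ` A) \<and> (\<forall>p\<in>A. S \<inter> cylinder N p \<noteq> {})"
    then have "initial L ` S \<subseteq> A" using cyl by fastforce
    moreover have "A \<subseteq> initial L ` S" using h cyl by fastforce
    ultimately show "initial L ` S = A" by (rule subset_antisym)
  qed
  then show ?thesis using True by (simp add: pattern_def)
qed (simp add: pattern_def)

lemma pattern_eq:
  assumes A: "A \<subseteq> words N L"
  shows "pattern N L A = CN N \<inter> \<Inter> (insert (inside_set (bdry_top N) (\<Union> (cylinder N ` A)))
                                   ((\<lambda>p. hit_set (bdry_top N) (cylinder N p)) ` A))"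
  using pattern_iff[OF A] CN_closed by (auto simp: inside_set_def hit_set_def)

lemma pattern_empty: "\<not> A \<subseteq> words N L \<Longrightarrow> pattern N L A = {}"
proof (rule ccontr)
  assume A: "\<not> A \<subseteq> words N L" and "pattern N L A \<noteq> {}"
  then obtain S where "S \<in> CN N" "initial L ` S = A" by (auto simp: pattern_def)
  then have "A \<subseteq> words N L" using initial_in_words CN_sub by blast
  then show False using A by simp
qed

lemma pattern_open: "openin (CN_top N) (pattern N L A)"
proof (cases "A \<subseteq> words N L")
  case False then show ?thesis by (simp add: pattern_empty)
next
  case A: True
  let ?X = "bdry_top N"
  let ?F = "insert (inside_set ?X (\<Union> (cylinder N ` A))) ((\<lambda>p. hit_set ?X (cylinder N p)) ` A)"
  have fA: "finite A" using A finite_words finite_subset by blast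
  have oW: "openin ?X (\<Union> (cylinder N ` A))" using cylinder_open by blast
  have "?F \<subseteq> vietoris_subbase ?X" unfolding vietoris_subbase_def using oW cylinder_open by blast
  moreover have "finite ?F" using fA by simp
  ultimately show ?thesis unfolding pattern_eq[OF A] by (intro openin_CN_basic) auto
qed

lemma pattern_compl: "CN N - pattern N L A = \<Union> (pattern N L ` (Pow (words N L) - {A}))"
proof (intro set_eqI iffI)
  fix S assume S: "S \<in> CN N - pattern N L A"
  have "initial L ` S \<subseteq> words N L" using CN_sub[of S N] initial_in_words S by blast
  moreover have "initial L ` S \<noteq> A" using S by (auto simp: pattern_def)
  ultimately have "initial L ` S \<in> Pow (words N L) - {A}" by blast
  moreover have "S \<in> pattern N L (initial L ` S)" using S by (simp add: pattern_def)
  ultimately show "S \<in> \<Union> (pattern N L ` (Pow (words N L) - {A}))" by blast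
qed (auto simp: pattern_def)

lemma pattern_compl_open: "openin (CN_top N) (CN N - pattern N L A)"
  unfolding pattern_compl by (intro openin_Union) (auto intro: pattern_open)

lemma pattern_sub: "pattern N L A \<subseteq> CN N" by (auto simp: pattern_def)

text \<open>Being clopen, a pattern set has a continuous indicator function.\<close>
lemma indicator_pattern_cont: "continuous_map (CN_top N) euclideanreal (indicator (pattern N L A))"
  unfolding continuous_map_def
proof (intro conjI allI impI)
  show "indicator (pattern N L A) \<in> topspace (CN_top N) \<rightarrow> topspace euclideanreal" by simp
next
  fix U :: "real set" assume "openin euclideanreal U"
  let ?C = "pattern N L A"
  have "{x \<in> topspace (CN_top N). indicator ?C x \<in> U} =
      (if 1 \<in> U then ?C else {}) \<union> (if 0 \<in> U then CN N - ?C else {})"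
    using pattern_sub[of N L A] by (auto simp: indicator_def)
  then show "openin (CN_top N) {x \<in> topspace (CN_top N). indicator ?C x \<in> U}"
    using pattern_open pattern_compl_open openin_topspace[of "CN_top N"] by (auto intro!: openin_Un)
qed

lemma pattern_disj: "A \<noteq> A' \<Longrightarrow> pattern N L A \<inter> pattern N L A' = {}"
  by (auto simp: pattern_def)

lemma pattern_borel: "pattern N L A \<in> borel_sets_of (CN_top N)"
  unfolding borel_sets_of_def using pattern_open by (auto intro: sigma_sets.Basic)

lemma pattern_props:
  assumes A: "A \<subseteq> words N L" and K: "K \<in> pattern N L A"
  shows "closedin (bdry_top N) K \<and> K \<subseteq> \<Union> (cylinder N ` A) \<and> (\<forall>p\<in>A. K \<inter> cylinder N p \<noteq> {})"
  using K CN_closed unfolding pattern_iff[OF A] by blast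

lemma compactin_cover:
  assumes "compactin X S" "\<And>U. U \<in> \<U> \<Longrightarrow> openin X U" "S \<subseteq> \<Union>\<U>"
  shows "\<exists>\<F>. finite \<F> \<and> \<F> \<subseteq> \<U> \<and> S \<subseteq> \<Union>\<F>"
  using assms unfolding compactin_def by blast

text \<open>Compactness of pattern sets, via the Alexander subbase theorem.  Let a family of subbasic
  sets cover the pattern set, and let \<V> be the open sets whose hit sets occur in it.  If some
  cylinder over A is covered by \<V>, finitely many hit sets suffice (the cylinder is compact and
  every member of the pattern set meets it).\<close>
lemma pattern_cover_by_hits:
  assumes A: "A \<subseteq> words N L" and p: "p \<in> A"
    and V: "\<And>V. V \<in> \<V> \<Longrightarrow> openin (bdry_top N) V" and cov: "cylinder N p \<subseteq> \<Union>\<V>"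
  shows "\<exists>\<F>. finite \<F> \<and> \<F> \<subseteq> \<V> \<and> pattern N L A \<subseteq> \<Union> (hit_set (bdry_top N) ` \<F>)"
proof -
  have "compactin (bdry_top N) (cylinder N p)" by (rule closed_compact[OF cylinder_closed])
  then obtain \<F> where F: "finite \<F>" "\<F> \<subseteq> \<V>" "cylinder N p \<subseteq> \<Union>\<F>"
    using compactin_cover[OF _ V cov] by blast
  have "K \<in> \<Union> (hit_set (bdry_top N) ` \<F>)" if K: "K \<in> pattern N L A" for K
  proof -
    have Kp: "closedin (bdry_top N) K" "K \<inter> cylinder N p \<noteq> {}" using pattern_props[OF A K] p by auto
    then obtain \<xi> where "\<xi> \<in> K" "\<xi> \<in> cylinder N p" by blast
    then obtain V where "V \<in> \<F>" "\<xi> \<in> V" using F by blast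
    then show ?thesis using Kp \<open>\<xi> \<in> K\<close> unfolding hit_set_def by blast
  qed
  then show ?thesis using F by blast
qed

text \<open>If no cylinder over A is contained in the open set G, the points of the cylinders outside
  G form an element of the pattern set (two distinct words are needed for it to lie in C_N).\<close>
lemma uncovered_part_in_pattern:
  assumes A: "A \<subseteq> words N L" and pq: "p \<in> A" "q \<in> A" "p \<noteq> q"
    and G: "openin (bdry_top N) G" and uncov: "\<forall>p\<in>A. \<not> cylinder N p \<subseteq> G"
  shows "\<Union> (cylinder N ` A) - G \<in> pattern N L A"
proof -
  let ?K = "\<Union> (cylinder N ` A) - G"
  have "finite A" using A finite_words finite_subset by blast
  then have "closedin (bdry_top N) (\<Union> (cylinder N ` A))"
    using cylinder_closed by (intro closedin_Union) auto
  then have cK: "closedin (bdry_top N) ?K" using G by (rule closedin_diff)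
  have meet: "\<And>p. p \<in> A \<Longrightarrow> \<exists>\<xi>. \<xi> \<in> cylinder N p \<and> \<xi> \<notin> G" using uncov by blast
  obtain \<xi> where x: "\<xi> \<in> cylinder N p" "\<xi> \<notin> G" using meet pq by blast
  obtain \<eta> where y: "\<eta> \<in> cylinder N q" "\<eta> \<notin> G" using meet pq by blast
  have "length p = L" "length q = L" using pq A by (auto simp: words_def)
  then have "\<xi> \<noteq> \<eta>" using x(1) y(1) pq by (auto simp: cylinder_def)
  moreover have "\<xi> \<in> ?K" "\<eta> \<in> ?K" using x y pq by auto
  ultimately have "?K \<in> CN N" using cK unfolding CN_def by blast
  moreover have "?K \<subseteq> \<Union> (cylinder N ` A)" by (rule Diff_subset)
  moreover have "\<forall>p'\<in>A. ?K \<inter> cylinder N p' \<noteq> {}"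
  proof
    fix p' assume "p' \<in> A"
    then obtain \<zeta> where "\<zeta> \<in> cylinder N p'" "\<zeta> \<notin> G" using meet by blast
    then have "\<zeta> \<in> ?K \<inter> cylinder N p'" using \<open>p' \<in> A\<close> by blast
    then show "?K \<inter> cylinder N p' \<noteq> {}" by blast
  qed
  ultimately show ?thesis unfolding pattern_iff[OF A] by (intro conjI)
qed

text \<open>Otherwise, let K0 be that element for G the union of \<V>.  As it meets no member of \<V>,
  it lies inside some U of the cover, and the compact remainder of the cylinders outside U is
  covered by finitely many members of \<V>.\<close>
lemma pattern_cover_with_inside:
  assumes A: "A \<subseteq> words N L" and pq: "p \<in> A" "q \<in> A" "p \<noteq> q"
    and V: "\<And>V. V \<in> \<V> \<Longrightarrow> openin (bdry_top N) V"
    and U: "\<And>U. U \<in> \<U> \<Longrightarrow> openin (bdry_top N) U"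
    and uncov: "\<forall>p\<in>A. \<not> cylinder N p \<subseteq> \<Union>\<V>"
    and cover: "\<And>K. K \<in> pattern N L A \<Longrightarrow> (\<exists>U\<in>\<U>. K \<subseteq> U) \<or> (\<exists>V\<in>\<V>. K \<inter> V \<noteq> {})"
  shows "\<exists>U\<in>\<U>. \<exists>\<F>. finite \<F> \<and> \<F> \<subseteq> \<V>
           \<and> pattern N L A \<subseteq> \<Union> (insert (inside_set (bdry_top N) U) (hit_set (bdry_top N) ` \<F>))"
proof -
  let ?X = "bdry_top N" and ?W = "\<Union> (cylinder N ` A)"
  define K0 where "K0 = ?W - \<Union>\<V>"
  have oV: "openin ?X (\<Union>\<V>)" by (rule openin_Union) (rule V)
  have K0C: "K0 \<in> pattern N L A"
    unfolding K0_def by (rule uncovered_part_in_pattern[OF A pq oV uncov])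
  have "\<not> (\<exists>V\<in>\<V>. K0 \<inter> V \<noteq> {})" by (auto simp: K0_def)
  then obtain U0 where U0: "U0 \<in> \<U>" "K0 \<subseteq> U0" using cover[OF K0C] by blast
  have "finite A" using A finite_words finite_subset by blast
  then have "closedin ?X ?W" using cylinder_closed by (intro closedin_Union) auto
  then have "closedin ?X (?W - U0)" using U[OF U0(1)] by (rule closedin_diff)
  then have cpt: "compactin ?X (?W - U0)" by (rule closed_compact)
  have sub: "?W - U0 \<subseteq> \<Union>\<V>" using U0(2) unfolding K0_def by blast
  obtain \<F> where F: "finite \<F>" "\<F> \<subseteq> \<V>" "?W - U0 \<subseteq> \<Union>\<F>"
    using compactin_cover[OF cpt V sub] by blast
  have "K \<in> \<Union> (insert (inside_set ?X U0) (hit_set ?X ` \<F>))" if K: "K \<in> pattern N L A" for K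
  proof (cases "K \<subseteq> U0")
    case True then show ?thesis using pattern_props[OF A K] by (auto simp: inside_set_def)
  next
    case False
    then obtain \<xi> where "\<xi> \<in> K" "\<xi> \<notin> U0" by blast
    then have "\<xi> \<in> ?W - U0" using pattern_props[OF A K] by blast
    then obtain V where "V \<in> \<F>" "\<xi> \<in> V" using F by blast
    then show ?thesis using pattern_props[OF A K] \<open>\<xi> \<in> K\<close> unfolding hit_set_def by blast
  qed
  then show ?thesis using U0 F by blast
qed

lemma pattern_compact:
  assumes A: "A \<subseteq> words N L" and pq: "p \<in> A" "q \<in> A" "p \<noteq> q"
  shows "compactin (CN_top N) (pattern N L A)"
proof -
  let ?X = "bdry_top N" and ?C = "pattern N L A" and ?B = "vietoris_subbase (bdry_top N)"
  have CU: "?C \<subseteq> \<Union> ?B" using pattern_sub CN_sub_vietoris_subbase by blast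
  have sub: "subtopology (CN_top N) ?C = subtopology (topology_generated_by ?B) ?C"
  proof -
    have "CN N \<inter> ?C = ?C" using pattern_sub by blast
    then show ?thesis unfolding CN_top_eq subtopology_subtopology by simp
  qed
  have "compact_space (subtopology (topology_generated_by ?B) ?C)"
  proof (rule Alexander_subbase_alt[OF CU _ subtopology_generated_by[OF CU, symmetric]])
    fix \<C> assume CS: "\<C> \<subseteq> ?B" and cov: "?C \<subseteq> \<Union>\<C>"
    define \<V> where "\<V> = {V. openin ?X V \<and> hit_set ?X V \<in> \<C>}"
    define \<U> where "\<U> = {U. openin ?X U \<and> inside_set ?X U \<in> \<C>}"
    have cover: "(\<exists>U\<in>\<U>. K \<subseteq> U) \<or> (\<exists>V\<in>\<V>. K \<inter> V \<noteq> {})" if K: "K \<in> ?C" for K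
    proof -
      obtain c where c: "c \<in> \<C>" "K \<in> c" using cov K by blast
      then obtain U where "openin ?X U" "c = inside_set ?X U \<or> c = hit_set ?X U"
        using CS unfolding vietoris_subbase_def by blast
      then show ?thesis using c unfolding \<U>_def \<V>_def inside_set_def hit_set_def by blast
    qed
    have oV: "\<And>V. V \<in> \<V> \<Longrightarrow> openin ?X V" and oU: "\<And>U. U \<in> \<U> \<Longrightarrow> openin ?X U"
      by (simp_all add: \<V>_def \<U>_def)
    show "\<exists>\<C>'. finite \<C>' \<and> \<C>' \<subseteq> \<C> \<and> ?C \<subseteq> \<Union>\<C>'"
    proof (cases "\<exists>p\<in>A. cylinder N p \<subseteq> \<Union>\<V>")
      case True
      then obtain p where p: "p \<in> A" "cylinder N p \<subseteq> \<Union>\<V>" by blast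
      obtain \<F> where F: "finite \<F>" "\<F> \<subseteq> \<V>" "?C \<subseteq> \<Union> (hit_set ?X ` \<F>)"
        using pattern_cover_by_hits[OF A p(1) oV p(2)] by blast
      have "hit_set ?X ` \<F> \<subseteq> \<C>" using F(2) by (auto simp: \<V>_def)
      then show ?thesis using F by blast
    next
      case False
      then have "\<forall>p\<in>A. \<not> cylinder N p \<subseteq> \<Union>\<V>" by blast
      then obtain U \<F> where U: "U \<in> \<U>" and F: "finite \<F>" "\<F> \<subseteq> \<V>"
        "?C \<subseteq> \<Union> (insert (inside_set ?X U) (hit_set ?X ` \<F>))"
        using pattern_cover_with_inside[OF A pq oV oU _ cover] by blast
      have "insert (inside_set ?X U) (hit_set ?X ` \<F>) \<subseteq> \<C>" using U F(2) by (auto simp: \<V>_def \<U>_def)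
      then show ?thesis using F by (intro exI[of _ "insert (inside_set ?X U) (hit_set ?X ` \<F>)"]) simp
    qed
  qed
  then show ?thesis unfolding compactin_subspace using sub pattern_sub by simp
qed

section \<open>R(T) is a finite union of rectangles of pattern sets\<close>

text \<open>The part of the convex hull below level L, computed from the level-L pattern A alone:
  the words v of length < L that begin some p \<in> A and at which some q \<in> A branches off.\<close>
definition pattern_hull :: "nat \<Rightarrow> letter list set \<Rightarrow> letter list set" where
  "pattern_hull L A = {v. length v < L \<and> (\<exists>p\<in>A. \<exists>q\<in>A. take (length v) p = v
       \<and> take (Suc (length v)) q \<noteq> take (Suc (length v)) p)}"

lemma Conv_below_level:
  assumes S: "S \<subseteq> bdry N"
  shows "Conv N S \<inter> {v. length v < L} = pattern_hull L (initial L ` S)"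
proof (intro set_eqI iffI)
  fix v assume v: "v \<in> Conv N S \<inter> {v. length v < L}"
  then obtain \<xi> \<eta> where x: "\<xi> \<in> S" "\<eta> \<in> S" "\<xi> \<noteq> \<eta>" "branch \<xi> \<eta> \<le> length v" "v = initial (length v) \<xi>"
    using Conv_eq[OF S] unfolding hull_words_def by blast
  have lv: "length v < L" using v by simp
  have "take (length v) (initial L \<xi>) = v" using x lv by simp
  moreover have "take (Suc (length v)) (initial L \<eta>) \<noteq> take (Suc (length v)) (initial L \<xi>)"
  proof -
    have "initial (Suc (length v)) \<eta> \<noteq> initial (Suc (length v)) \<xi>"
      using initial_eq_branch[of \<eta> \<xi> "Suc (length v)"] x by (auto simp: branch_sym)
    then show ?thesis using lv by simp
  qed
  ultimately show "v \<in> pattern_hull L (initial L ` S)" unfolding pattern_hull_def using lv x by blast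
next
  fix v assume "v \<in> pattern_hull L (initial L ` S)"
  then obtain \<xi> \<eta> where lv: "length v < L" and x: "\<xi> \<in> S" "\<eta> \<in> S"
    and t: "take (length v) (initial L \<xi>) = v"
    and d: "take (Suc (length v)) (initial L \<eta>) \<noteq> take (Suc (length v)) (initial L \<xi>)"
    unfolding pattern_hull_def by blast
  have v: "v = initial (length v) \<xi>" using t lv by simp
  have d': "initial (Suc (length v)) \<eta> \<noteq> initial (Suc (length v)) \<xi>" using d lv by simp
  then have ne: "\<xi> \<noteq> \<eta>" by auto
  have "branch \<xi> \<eta> \<le> length v"
    using initial_eq_branch[OF ne, of "Suc (length v)"] d' by auto
  then have "v \<in> hull_words S" unfolding hull_words_def using x ne v by blast
  then show "v \<in> Conv N S \<inter> {v. length v < L}" using Conv_eq[OF S] lv by blast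
qed

text \<open>If 1 lies in the hull, the hull is closed under taking initial segments: every point
  starts with a letter differing from the first letter of some other point of S.\<close>
lemma Conv_take:
  assumes S: "S \<subseteq> bdry N" and e: "[] \<in> Conv N S" and v: "v \<in> Conv N S" and k: "k \<le> length v"
  shows "take k v \<in> Conv N S"
proof -
  obtain \<xi>' \<eta>' where a: "\<xi>' \<in> S" "\<eta>' \<in> S" "\<xi>' \<noteq> \<eta>'" "branch \<xi>' \<eta>' = 0"
    using e Conv_eq[OF S] unfolding hull_words_def by auto
  have a0: "\<xi>' 0 \<noteq> \<eta>' 0" using branch_0_iff a by blast
  obtain \<xi> where x: "\<xi> \<in> S" "v = initial (length v) \<xi>"
    using v Conv_eq[OF S] unfolding hull_words_def by blast
  obtain \<zeta> where z: "\<zeta> \<in> S" "\<zeta> 0 \<noteq> \<xi> 0" using a a0 by metis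
  have "take k v = initial k \<xi>" using x k by (metis min.absorb1 take_initial)
  moreover have "\<xi> \<noteq> \<zeta>" "branch \<xi> \<zeta> \<le> length (initial k \<xi>)" using z branch_0[of \<xi> \<zeta>] by auto
  ultimately have "take k v \<in> hull_words S" using hull_wordsI[OF x(1) z(1)] by simp
  then show ?thesis using Conv_eq[OF S] by simp
qed

definition level :: "letter list set \<Rightarrow> nat" where
  "level T = Suc (Suc (Max (length ` T)))"

lemma level_gt: "finite T \<Longrightarrow> v \<in> T \<Longrightarrow> Suc (length v) < level T"
  by (auto simp: level_def intro!: Max_ge le_imp_less_Suc)

text \<open>A hull intersection containing 1 agrees with T everywhere once it agrees with T below
  level T: a longer word in it would have an initial segment of length level T - 1 in it,
  which would be too long for T.\<close>
lemma Conv_Int_from_level: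
  assumes T: "finite T" "[] \<in> T" and S1: "S1 \<subseteq> bdry N" and S2: "S2 \<subseteq> bdry N"
    and h: "(Conv N S1 \<inter> Conv N S2) \<inter> {v. length v < level T} = T"
  shows "Conv N S1 \<inter> Conv N S2 = T"
proof
  show "T \<subseteq> Conv N S1 \<inter> Conv N S2" using h by auto
next
  let ?L = "level T"
  have e1: "[] \<in> Conv N S1" and e2: "[] \<in> Conv N S2" using h T(2) by blast+
  show "Conv N S1 \<inter> Conv N S2 \<subseteq> T"
  proof
    fix v assume v: "v \<in> Conv N S1 \<inter> Conv N S2"
    show "v \<in> T"
    proof (cases "length v < ?L")
      case True then show ?thesis using h v by auto
    next
      case False
      let ?w = "take (?L - 1) v"
      have "?w \<in> Conv N S1" "?w \<in> Conv N S2"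
        using Conv_take[OF S1 e1] Conv_take[OF S2 e2] v False by auto
      moreover have lw: "length ?w = ?L - 1" using False by simp
      moreover have "length ?w < ?L" using lw by (simp add: level_def)
      ultimately have "?w \<in> T" using h by blast
      then have "Suc (length ?w) < ?L" by (rule level_gt[OF T(1)])
      then show ?thesis using lw by (simp add: level_def)
    qed
  qed
qed

lemma Conv_Int_iff_pattern_hull:
  assumes T: "finite T" "[] \<in> T" and S1: "S1 \<subseteq> bdry N" and S2: "S2 \<subseteq> bdry N"
  shows "Conv N S1 \<inter> Conv N S2 = T \<longleftrightarrow>
    pattern_hull (level T) (initial (level T) ` S1) \<inter> pattern_hull (level T) (initial (level T) ` S2) = T"
proof -
  let ?L = "level T"
  have eq: "pattern_hull ?L (initial ?L ` S1) \<inter> pattern_hull ?L (initial ?L ` S2)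
      = (Conv N S1 \<inter> Conv N S2) \<inter> {v. length v < ?L}"
    using Conv_below_level[OF S1, of ?L] Conv_below_level[OF S2, of ?L] by blast
  have "T \<subseteq> {v. length v < ?L}" using level_gt[OF T(1)] by fastforce
  then show ?thesis unfolding eq using Conv_Int_from_level[OF T S1 S2] by blast
qed

definition admissible :: "nat \<Rightarrow> letter list set \<Rightarrow> (letter list set \<times> letter list set) set" where
  "admissible N T = {(A, B). A \<in> Pow (words N (level T)) \<and> B \<in> Pow (words N (level T))
                           \<and> pattern_hull (level T) A \<inter> pattern_hull (level T) B = T}"

lemma finite_admissible: "finite (admissible N T)"
proof -
  have "admissible N T \<subseteq> Pow (words N (level T)) \<times> Pow (words N (level T))" by (auto simp: admissible_def)
  then show ?thesis using finite_words by (meson finite_Pow_iff finite_SigmaI finite_subset)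
qed

lemma RR_decomp:
  assumes T: "finite T" "[] \<in> T"
  shows "RR N T = (\<Union>(A, B)\<in>admissible N T. pattern N (level T) A \<times> pattern N (level T) B)"
proof (intro set_eqI iffI)
  fix x assume x: "x \<in> RR N T"
  then obtain S1 S2 where x: "x = (S1, S2)" "S1 \<in> CN N" "S2 \<in> CN N" "Conv N S1 \<inter> Conv N S2 = T"
    by (auto simp: RR_def)
  let ?A = "initial (level T) ` S1" and ?B = "initial (level T) ` S2"
  have "?A \<subseteq> words N (level T)" "?B \<subseteq> words N (level T)"
    using CN_sub[OF x(2)] CN_sub[OF x(3)] initial_in_words by blast+
  moreover have "pattern_hull (level T) ?A \<inter> pattern_hull (level T) ?B = T"
    using Conv_Int_iff_pattern_hull[OF T CN_sub[OF x(2)] CN_sub[OF x(3)]] x(4) by simp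
  ultimately have "(?A, ?B) \<in> admissible N T" unfolding admissible_def by simp
  moreover have "S1 \<in> pattern N (level T) ?A" "S2 \<in> pattern N (level T) ?B"
    using x by (auto simp: pattern_def)
  ultimately show "x \<in> (\<Union>(A, B)\<in>admissible N T. pattern N (level T) A \<times> pattern N (level T) B)"
    using x by blast
next
  fix x assume "x \<in> (\<Union>(A, B)\<in>admissible N T. pattern N (level T) A \<times> pattern N (level T) B)"
  then obtain A B S1 S2 where g: "(A, B) \<in> admissible N T" and x: "x = (S1, S2)"
    and s: "S1 \<in> pattern N (level T) A" "S2 \<in> pattern N (level T) B" by blast
  have c: "S1 \<in> CN N" "S2 \<in> CN N" "initial (level T) ` S1 = A" "initial (level T) ` S2 = B"
    using s by (auto simp: pattern_def)
  have "pattern_hull (level T) A \<inter> pattern_hull (level T) B = T" using g by (simp add: admissible_def)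
  then have "Conv N S1 \<inter> Conv N S2 = T"
    using Conv_Int_iff_pattern_hull[OF T CN_sub[OF c(1)] CN_sub[OF c(2)]] c by simp
  then show "x \<in> RR N T" using x c by (simp add: RR_def)
qed

text \<open>Since 1 \<in> T lies in both hulls, both patterns of an admissible pair contain two distinct
  words; so the corresponding pattern sets are compact.\<close>
lemma admissible_two:
  assumes "(A, B) \<in> admissible N T" "[] \<in> T"
  shows "A \<subseteq> words N (level T) \<and> B \<subseteq> words N (level T)
       \<and> (\<exists>p\<in>A. \<exists>q\<in>A. p \<noteq> q) \<and> (\<exists>p\<in>B. \<exists>q\<in>B. p \<noteq> q)"
proof -
  have g: "A \<subseteq> words N (level T)" "B \<subseteq> words N (level T)"
    "pattern_hull (level T) A \<inter> pattern_hull (level T) B = T"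
    using assms(1) by (auto simp: admissible_def)
  have "[] \<in> pattern_hull (level T) A" "[] \<in> pattern_hull (level T) B" using g(3) assms(2) by blast+
  then have "\<exists>p\<in>A. \<exists>q\<in>A. take 1 q \<noteq> take 1 p" "\<exists>p\<in>B. \<exists>q\<in>B. take 1 q \<noteq> take 1 p"
    unfolding pattern_hull_def by auto
  then have "\<exists>p\<in>A. \<exists>q\<in>A. p \<noteq> q" "\<exists>p\<in>B. \<exists>q\<in>B. p \<noteq> q" by metis+
  then show ?thesis using g by blast
qed

section \<open>Measures of R(T)\<close>

text \<open>The properties of subset currents used below: they live on the Borel sets of C_N and are
  finite on pattern sets with two distinct words (these are compact).  Unlike subset currents,
  this class is visibly closed under nonnegative linear combinations.\<close>
definition pattern_finite :: "nat \<Rightarrow> (nat \<Rightarrow> letter) set measure \<Rightarrow> bool" where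
  "pattern_finite N M \<longleftrightarrow> space M = CN N \<and> sets M = borel_sets_of (CN_top N) \<and>
     (\<forall>L A p q. A \<subseteq> words N L \<longrightarrow> p \<in> A \<longrightarrow> q \<in> A \<longrightarrow> p \<noteq> q \<longrightarrow> emeasure M (pattern N L A) < \<infinity>)"

lemma pattern_finite_fin:
  "pattern_finite N M \<Longrightarrow> A \<subseteq> words N L \<Longrightarrow> p \<in> A \<Longrightarrow> q \<in> A \<Longrightarrow> p \<noteq> q
    \<Longrightarrow> emeasure M (pattern N L A) < \<infinity>"
  by (simp add: pattern_finite_def)

lemma pattern_finite_sets: "pattern_finite N M \<Longrightarrow> sets M = borel_sets_of (CN_top N)"
  by (simp add: pattern_finite_def)

lemma pattern_finite_space: "pattern_finite N M \<Longrightarrow> space M = CN N"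
  by (simp add: pattern_finite_def)

lemma pattern_finite_pattern: "pattern_finite N M \<Longrightarrow> pattern N L A \<in> sets M"
  by (simp add: pattern_finite_sets pattern_borel)

lemma SCurr_pattern_finite: "\<mu> \<in> SCurr N \<Longrightarrow> pattern_finite N \<mu>"
  unfolding pattern_finite_def SCurr_def using pattern_compact by blast

text \<open>Every S \<in> C_N has two distinct points, hence lies in a pattern set with two distinct words
  (at a level beyond their branch point).  There are countably many such pattern sets, so
  measures of our class are \<sigma>-finite.\<close>
lemma CN_in_split_pattern:
  assumes S: "S \<in> CN N"
  shows "\<exists>L. initial L ` S \<subseteq> words N L \<and> (\<exists>p\<in>initial L ` S. \<exists>q\<in>initial L ` S. p \<noteq> q)
           \<and> S \<in> pattern N L (initial L ` S)"
proof -
  obtain \<xi> \<eta> where x: "\<xi> \<in> S" "\<eta> \<in> S" "\<xi> \<noteq> \<eta>" using S by (auto simp: CN_def)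
  define L where "L = Suc (branch \<xi> \<eta>)"
  have "initial L \<xi> \<noteq> initial L \<eta>" using initial_eq_branch[OF x(3), of L] by (simp add: L_def)
  moreover have "initial L ` S \<subseteq> words N L" using CN_sub[OF S] initial_in_words by blast
  moreover have "S \<in> pattern N L (initial L ` S)" using S by (simp add: pattern_def)
  ultimately show ?thesis using x by blast
qed

lemma pattern_finite_sigma_finite:
  assumes n: "pattern_finite N M"
  shows "sigma_finite_measure M"
proof
  define \<A> where "\<A> = (\<Union>L. pattern N L ` {A. A \<subseteq> words N L \<and> (\<exists>p\<in>A. \<exists>q\<in>A. p \<noteq> q)})"
  have "countable \<A>" unfolding \<A>_def
  proof (intro countable_UN[OF countableI_type] countable_image countable_finite)
    fix L
    show "finite {A. A \<subseteq> words N L \<and> (\<exists>p\<in>A. \<exists>q\<in>A. p \<noteq> q)}"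
      by (rule finite_subset[of _ "Pow (words N L)"]) (auto simp: finite_words)
  qed
  moreover have "\<A> \<subseteq> sets M" unfolding pattern_finite_sets[OF n] \<A>_def using pattern_borel by blast
  moreover have "\<Union>\<A> = space M"
  proof
    show "\<Union>\<A> \<subseteq> space M" unfolding pattern_finite_space[OF n] \<A>_def using pattern_sub by blast
  next
    show "space M \<subseteq> \<Union>\<A>"
    proof
      fix S assume "S \<in> space M"
      then obtain L where L: "initial L ` S \<subseteq> words N L"
        "\<exists>p\<in>initial L ` S. \<exists>q\<in>initial L ` S. p \<noteq> q" "S \<in> pattern N L (initial L ` S)"
        using CN_in_split_pattern[of S N] pattern_finite_space[OF n] by auto
      then show "S \<in> \<Union>\<A>" unfolding \<A>_def by blast
    qed
  qed
  moreover have "\<forall>a\<in>\<A>. emeasure M a \<noteq> \<infinity>"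
  proof
    fix a assume "a \<in> \<A>"
    then obtain L A p q where "A \<subseteq> words N L" "p \<in> A" "q \<in> A" "p \<noteq> q" "a = pattern N L A"
      unfolding \<A>_def by blast
    then have "emeasure M a < \<infinity>" using pattern_finite_fin[OF n] by blast
    then show "emeasure M a \<noteq> \<infinity>" by simp
  qed
  ultimately show "\<exists>A. countable A \<and> A \<subseteq> sets M \<and> \<Union> A = space M \<and> (\<forall>a\<in>A. emeasure M a \<noteq> \<infinity>)"
    by blast
qed

lemma emeasure_rects:
  assumes sf: "sigma_finite_measure M'" and I: "finite I"
    and X: "\<And>i. i \<in> I \<Longrightarrow> X i \<in> sets M" and Y: "\<And>i. i \<in> I \<Longrightarrow> Y i \<in> sets M'"
    and d: "disjoint_family_on (\<lambda>i. X i \<times> Y i) I"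
  shows "emeasure (M \<Otimes>\<^sub>M M') (\<Union>i\<in>I. X i \<times> Y i) = (\<Sum>i\<in>I. emeasure M (X i) * emeasure M' (Y i))"
proof -
  have sub: "(\<lambda>i. X i \<times> Y i) ` I \<subseteq> sets (M \<Otimes>\<^sub>M M')"
  proof (rule image_subsetI)
    fix i assume "i \<in> I"
    then show "X i \<times> Y i \<in> sets (M \<Otimes>\<^sub>M M')" using X Y by (intro pair_measureI) auto
  qed
  have 1: "(\<Sum>i\<in>I. emeasure (M \<Otimes>\<^sub>M M') (X i \<times> Y i)) = emeasure (M \<Otimes>\<^sub>M M') (\<Union>i\<in>I. X i \<times> Y i)"
    by (rule sum_emeasure[OF sub d I])
  have 2: "emeasure (M \<Otimes>\<^sub>M M') (X i \<times> Y i) = emeasure M (X i) * emeasure M' (Y i)" if "i \<in> I" for i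
    by (rule sigma_finite_measure.emeasure_pair_measure_Times[OF sf X[OF that] Y[OF that]])
  show ?thesis unfolding 1[symmetric] by (rule sum.cong) (simp_all add: 2)
qed

lemma emeasure_RR_sum:
  assumes n: "pattern_finite N M" "pattern_finite N M'" and T: "finite T" "[] \<in> T"
  shows "emeasure (M \<Otimes>\<^sub>M M') (RR N T) =
    (\<Sum>AB\<in>admissible N T. emeasure M (pattern N (level T) (fst AB)) * emeasure M' (pattern N (level T) (snd AB)))"
proof -
  let ?L = "level T"
  have eq: "RR N T = (\<Union>AB\<in>admissible N T. pattern N ?L (fst AB) \<times> pattern N ?L (snd AB))"
    unfolding RR_decomp[OF T] by (auto simp: split_beta)
  have disj: "disjoint_family_on (\<lambda>AB. pattern N ?L (fst AB) \<times> pattern N ?L (snd AB)) (admissible N T)"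
    unfolding disjoint_family_on_def
  proof (intro ballI impI)
    fix AB AB' :: "letter list set \<times> letter list set" assume "AB \<noteq> AB'"
    then have "fst AB \<noteq> fst AB' \<or> snd AB \<noteq> snd AB'" by (auto simp: prod_eq_iff)
    then show "pattern N ?L (fst AB) \<times> pattern N ?L (snd AB) \<inter> (pattern N ?L (fst AB') \<times> pattern N ?L (snd AB')) = {}"
      using pattern_disj by blast
  qed
  have sf: "sigma_finite_measure M'" using n(2) by (rule pattern_finite_sigma_finite)
  have Xs: "\<And>AB. AB \<in> admissible N T \<Longrightarrow> pattern N ?L (fst AB) \<in> sets M" by (rule pattern_finite_pattern[OF n(1)])
  have Ys: "\<And>AB. AB \<in> admissible N T \<Longrightarrow> pattern N ?L (snd AB) \<in> sets M'" by (rule pattern_finite_pattern[OF n(2)])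
  show ?thesis unfolding eq by (rule emeasure_rects[OF sf finite_admissible Xs Ys disj])
qed

lemma admissible_fin:
  assumes n: "pattern_finite N M" and g: "AB \<in> admissible N T" and T: "[] \<in> T"
  shows "emeasure M (pattern N (level T) (fst AB)) < \<infinity>" "emeasure M (pattern N (level T) (snd AB)) < \<infinity>"
proof -
  obtain A B where AB: "AB = (A, B)" by (cases AB)
  have gg: "A \<subseteq> words N (level T) \<and> B \<subseteq> words N (level T) \<and> (\<exists>p\<in>A. \<exists>q\<in>A. p \<noteq> q) \<and> (\<exists>p\<in>B. \<exists>q\<in>B. p \<noteq> q)"
    using admissible_two[of A B N T] g T AB by simp
  then show "emeasure M (pattern N (level T) (fst AB)) < \<infinity>" "emeasure M (pattern N (level T) (snd AB)) < \<infinity>"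
    using pattern_finite_fin[OF n] AB by auto
qed

lemma RR_fin:
  assumes n: "pattern_finite N M" "pattern_finite N M'" and T: "finite T" "[] \<in> T"
  shows "emeasure (M \<Otimes>\<^sub>M M') (RR N T) < \<infinity>"
proof -
  have "\<forall>AB\<in>admissible N T. emeasure M (pattern N (level T) (fst AB)) * emeasure M' (pattern N (level T) (snd AB)) < top"
    using admissible_fin[OF n(1) _ T(2)] admissible_fin[OF n(2) _ T(2)] by (auto simp: ennreal_mult_less_top)
  then show ?thesis unfolding emeasure_RR_sum[OF n T] using finite_admissible ennreal_sum_less_top by auto
qed

lemma measure_RR_sum:
  assumes n: "pattern_finite N M" "pattern_finite N M'" and T: "finite T" "[] \<in> T"
  shows "measure (M \<Otimes>\<^sub>M M') (RR N T) =
    (\<Sum>AB\<in>admissible N T. measure M (pattern N (level T) (fst AB)) * measure M' (pattern N (level T) (snd AB)))"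
proof -
  have fin: "\<And>AB. AB \<in> admissible N T \<Longrightarrow>
     emeasure M (pattern N (level T) (fst AB)) * emeasure M' (pattern N (level T) (snd AB)) < top"
    using admissible_fin[OF n(1) _ T(2)] admissible_fin[OF n(2) _ T(2)] by (simp add: ennreal_mult_less_top)
  show ?thesis
    unfolding measure_def emeasure_RR_sum[OF n T]
    by (subst enn2real_sum) (auto simp: fin enn2real_mult)
qed

lemma msc_scale: "msc c M = scale_measure (ennreal c) M"
  by (simp add: msc_def scale_measure_def)

lemma madd_props:
  assumes s: "sets M' = sets M"
  shows "space (madd M M') = space M" "sets (madd M M') = sets M"
    "X \<in> sets M \<Longrightarrow> emeasure (madd M M') X = emeasure M X + emeasure M' X"
proof -
  show "space (madd M M') = space M" by (simp add: madd_def)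
  show "sets (madd M M') = sets M" by (simp add: madd_def)
  assume X: "X \<in> sets M"
  show "emeasure (madd M M') X = emeasure M X + emeasure M' X"
    unfolding madd_def
  proof (rule emeasure_measure_of_sigma)
    show "sigma_algebra (space M) (sets M)" ..
    show "positive (sets M) (\<lambda>A. emeasure M A + emeasure M' A)" by (simp add: positive_def)
    show "countably_additive (sets M) (\<lambda>A. emeasure M A + emeasure M' A)"
    proof (rule countably_additiveI)
      fix A :: "nat \<Rightarrow> _" assume *: "range A \<subseteq> sets M" "disjoint_family A"
      have "(\<Sum>i. emeasure M (A i) + emeasure M' (A i)) = (\<Sum>i. emeasure M (A i)) + (\<Sum>i. emeasure M' (A i))"
        by (rule suminf_add[symmetric]) (rule summableI)+
      also have "\<dots> = emeasure M (\<Union>i. A i) + emeasure M' (\<Union>i. A i)"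
        using * s by (simp add: suminf_emeasure)
      finally show "(\<Sum>i. emeasure M (A i) + emeasure M' (A i)) = emeasure M (\<Union>i. A i) + emeasure M' (\<Union>i. A i)" .
    qed
  qed (rule X)
qed

lemma pattern_finite_comb:
  assumes n: "pattern_finite N \<mu>" "pattern_finite N \<mu>'" and ab: "a \<ge> 0" "b \<ge> 0"
  shows "pattern_finite N (madd (msc a \<mu>) (msc b \<mu>'))"
    and "X \<in> sets \<mu> \<Longrightarrow> emeasure (madd (msc a \<mu>) (msc b \<mu>')) X = ennreal a * emeasure \<mu> X + ennreal b * emeasure \<mu>' X"
proof -
  have s: "sets (msc b \<mu>') = sets (msc a \<mu>)" using n by (simp add: msc_scale pattern_finite_def)
  have e: "X \<in> sets \<mu> \<Longrightarrow> emeasure (madd (msc a \<mu>) (msc b \<mu>')) X = ennreal a * emeasure \<mu> X + ennreal b * emeasure \<mu>' X" for X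
    using madd_props(3)[OF s, of X] by (simp add: msc_scale)
  then show "X \<in> sets \<mu> \<Longrightarrow> emeasure (madd (msc a \<mu>) (msc b \<mu>')) X = ennreal a * emeasure \<mu> X + ennreal b * emeasure \<mu>' X" .
  show "pattern_finite N (madd (msc a \<mu>) (msc b \<mu>'))"
    unfolding pattern_finite_def
  proof (intro conjI allI impI)
    show "space (madd (msc a \<mu>) (msc b \<mu>')) = CN N"
      using madd_props(1)[OF s] n by (simp add: msc_scale space_scale_measure pattern_finite_def)
    show "sets (madd (msc a \<mu>) (msc b \<mu>')) = borel_sets_of (CN_top N)"
      using madd_props(2)[OF s] n by (simp add: msc_scale pattern_finite_def)
    fix L A p q assume h: "A \<subseteq> words N L" "p \<in> A" "q \<in> A" "p \<noteq> q"
    have "emeasure \<mu> (pattern N L A) < \<infinity>" "emeasure \<mu>' (pattern N L A) < \<infinity>"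
      using pattern_finite_fin[OF n(1) h] pattern_finite_fin[OF n(2) h] by auto
    moreover have "pattern N L A \<in> sets \<mu>" using pattern_finite_pattern[OF n(1)] .
    ultimately show "emeasure (madd (msc a \<mu>) (msc b \<mu>')) (pattern N L A) < \<infinity>"
      by (simp add: e ennreal_mult_less_top)
  qed
qed

section \<open>Translation invariance\<close>

text \<open>The preimage of a pattern set under S \<mapsto> h S is a finite union of pattern sets at a deeper
  level, since the first L letters of h \<xi> only depend on the first L + |h| + 1 letters of \<xi>.\<close>
lemma pattern_preimage_eq:
  assumes h: "h \<in> FN N"
  shows "(\<lambda>S. bact h ` S) -` pattern N L A \<inter> CN N
       = \<Union> (pattern N (L + length h + 1) ` {A' \<in> Pow (words N (L + length h + 1)).
            (\<lambda>w. take L (reduce (h @ w))) ` A' = A})"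
proof (intro set_eqI iffI)
  let ?L' = "L + length h + 1"
  let ?F = "\<lambda>w. take L (reduce (h @ w))"
  have key: "initial L ` bact h ` S = ?F ` initial ?L' ` S" if S: "S \<in> CN N" for S
  proof -
    have "\<And>\<xi>. \<xi> \<in> S \<Longrightarrow> initial L (bact h \<xi>) = ?F (initial ?L' \<xi>)"
      using initial_bact[OF h, of _ L ?L'] CN_sub[OF S] by auto
    then show ?thesis by (simp add: image_image cong: image_cong)
  qed
  fix S
  {
    assume "S \<in> (\<lambda>S. bact h ` S) -` pattern N L A \<inter> CN N"
    then have S: "S \<in> CN N" and e: "initial L ` bact h ` S = A"
      by (auto simp: pattern_def)
    have "initial ?L' ` S \<in> {A' \<in> Pow (words N ?L'). ?F ` A' = A}"
      using key[OF S] e initial_in_words CN_sub[OF S] by auto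
    moreover have "S \<in> pattern N ?L' (initial ?L' ` S)" using S by (simp add: pattern_def)
    ultimately show "S \<in> \<Union> (pattern N ?L' ` {A' \<in> Pow (words N ?L'). ?F ` A' = A})" by blast
  }
  {
    assume "S \<in> \<Union> (pattern N ?L' ` {A' \<in> Pow (words N ?L'). ?F ` A' = A})"
    then obtain A' where "?F ` A' = A" "S \<in> pattern N ?L' A'" by blast
    then have S: "S \<in> CN N" and e: "?F ` initial ?L' ` S = A" by (auto simp: pattern_def)
    have "bact h ` S \<in> CN N" by (rule bact_CN[OF h S])
    then show "S \<in> (\<lambda>S. bact h ` S) -` pattern N L A \<inter> CN N"
      using S e key[OF S] by (simp add: pattern_def)
  }
qed

lemma pattern_preimage_borel:
  "h \<in> FN N \<Longrightarrow> (\<lambda>S. bact h ` S) -` pattern N L A \<inter> CN N \<in> borel_sets_of (CN_top N)"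
  unfolding pattern_preimage_eq borel_sets_of_def
  by (intro sigma_sets.Basic CollectI openin_Union) (auto intro: pattern_open)

lemma SCurr_pattern_preimage:
  assumes M: "M \<in> SCurr N" and h: "h \<in> FN N"
  shows "emeasure M ((\<lambda>S. bact h ` S) -` pattern N L A \<inter> CN N) = emeasure M (pattern N L A)"
proof -
  have "\<forall>g\<in>FN N. \<forall>A\<in>sets M. emeasure M ((\<lambda>S. bact g ` S) -` A \<inter> space M) = emeasure M A"
    using M unfolding SCurr_def mem_Collect_eq by (elim conjE) assumption
  moreover have "pattern N L A \<in> sets M" using pattern_finite_pattern[OF SCurr_pattern_finite[OF M]] .
  ultimately show ?thesis using h pattern_finite_space[OF SCurr_pattern_finite[OF M]] by simp
qed

lemma translate_eq_iff:
  assumes X: "X \<subseteq> FN N" and T: "T \<subseteq> FN N"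
  shows "gmul (ginv g) ` X = T \<longleftrightarrow> X = gmul g ` T"
proof -
  have "gmul g ` gmul (ginv g) ` X = X"
    using X by (force simp: image_image gmul_gmul_inv)
  moreover have "gmul (ginv g) ` gmul g ` T = T"
    using T by (force simp: image_image gmul_inv_gmul)
  ultimately show ?thesis by metis
qed

text \<open>By equivariance of hulls, (S1, S2) \<in> R(gT) iff (g\<inverse> S1, g\<inverse> S2) \<in> R(T).\<close>
lemma RR_translate:
  assumes g: "g \<in> FN N" and T: "T \<subseteq> FN N"
  shows "RR N (gmul g ` T) = {(S1, S2). S1 \<in> CN N \<and> S2 \<in> CN N
                               \<and> (bact (ginv g) ` S1, bact (ginv g) ` S2) \<in> RR N T}"
proof -
  let ?h = "ginv g"
  have h: "?h \<in> FN N" using g by (rule ginv_FN)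
  have inj: "inj_on (gmul ?h) (FN N)"
    by (rule inj_on_inverseI[of _ "gmul g"]) (simp add: gmul_gmul_inv)
  have iff: "Conv N S1 \<inter> Conv N S2 = gmul g ` T
      \<longleftrightarrow> Conv N (bact ?h ` S1) \<inter> Conv N (bact ?h ` S2) = T"
    if S: "S1 \<in> CN N" "S2 \<in> CN N" for S1 S2
  proof -
    have "Conv N (bact ?h ` S1) \<inter> Conv N (bact ?h ` S2) = gmul ?h ` (Conv N S1 \<inter> Conv N S2)"
      using Conv_equiv[OF h CN_sub[OF S(1)]] Conv_equiv[OF h CN_sub[OF S(2)]]
        inj_on_image_Int[OF inj Conv_sub_FN Conv_sub_FN] by simp
    moreover have "Conv N S1 \<inter> Conv N S2 \<subseteq> FN N" using Conv_sub_FN by blast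
    ultimately show ?thesis using translate_eq_iff[OF _ T] by metis
  qed
  show ?thesis
    unfolding RR_def using iff bact_CN[OF h] by auto
qed

lemma RR_measure_translate:
  assumes g: "g \<in> FN N" and T: "T \<subseteq> FN N" "finite T" "[] \<in> T"
    and \<mu>: "\<mu> \<in> SCurr N" and \<nu>: "\<nu> \<in> SCurr N"
  shows "emeasure (\<mu> \<Otimes>\<^sub>M \<nu>) (RR N T) = emeasure (\<mu> \<Otimes>\<^sub>M \<nu>) (RR N (gmul g ` T))"
proof -
  let ?h = "ginv g" and ?L = "level T"
  let ?D = "\<lambda>A. (\<lambda>S. bact ?h ` S) -` pattern N ?L A \<inter> CN N"
  have h: "?h \<in> FN N" using g by (rule ginv_FN)
  have n: "pattern_finite N \<mu>" "pattern_finite N \<nu>" using \<mu> \<nu> by (auto intro: SCurr_pattern_finite)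
  have eq: "RR N (gmul g ` T) = (\<Union>AB\<in>admissible N T. ?D (fst AB) \<times> ?D (snd AB))"
    unfolding RR_translate[OF g T(1)] RR_decomp[OF T(2,3)] by (auto simp: split_beta)
  have disj: "disjoint_family_on (\<lambda>AB. ?D (fst AB) \<times> ?D (snd AB)) (admissible N T)"
    unfolding disjoint_family_on_def
  proof (intro ballI impI)
    fix AB AB' :: "letter list set \<times> letter list set" assume "AB \<noteq> AB'"
    then have "fst AB \<noteq> fst AB' \<or> snd AB \<noteq> snd AB'" by (auto simp: prod_eq_iff)
    then show "?D (fst AB) \<times> ?D (snd AB) \<inter> (?D (fst AB') \<times> ?D (snd AB')) = {}"
      using pattern_disj by blast
  qed
  have Xs: "\<And>AB. ?D (fst AB) \<in> sets \<mu>" and Ys: "\<And>AB. ?D (snd AB) \<in> sets \<nu>"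
    using pattern_preimage_borel[OF h] pattern_finite_sets[OF n(1)] pattern_finite_sets[OF n(2)] by simp_all
  have "emeasure (\<mu> \<Otimes>\<^sub>M \<nu>) (RR N (gmul g ` T)) =
     (\<Sum>AB\<in>admissible N T. emeasure \<mu> (?D (fst AB)) * emeasure \<nu> (?D (snd AB)))"
    unfolding eq by (rule emeasure_rects[OF pattern_finite_sigma_finite[OF n(2)] finite_admissible Xs Ys disj])
  also have "\<dots> = (\<Sum>AB\<in>admissible N T. emeasure \<mu> (pattern N ?L (fst AB)) * emeasure \<nu> (pattern N ?L (snd AB)))"
    using SCurr_pattern_preimage[OF \<mu> h] SCurr_pattern_preimage[OF \<nu> h] by simp
  also have "\<dots> = emeasure (\<mu> \<Otimes>\<^sub>M \<nu>) (RR N T)"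
    by (rule emeasure_RR_sum[OF n T(2,3), symmetric])
  finally show ?thesis by simp
qed

lemma weakstar_cont:
  assumes f: "f \<in> Cc (CN_top N)"
  shows "continuous_map (weakstar N) euclideanreal (\<lambda>\<mu>. \<integral>S. f S \<partial>\<mu>)"
  unfolding continuous_map_def
proof (intro conjI allI impI)
  show "(\<lambda>\<mu>. \<integral>S. f S \<partial>\<mu>) \<in> topspace (weakstar N) \<rightarrow> topspace euclideanreal" by simp
next
  fix U :: "real set" assume "openin euclideanreal U"
  then have oU: "open U" by simp
  let ?\<S> = "{{\<mu> \<in> SCurr N. (\<integral>S. f S \<partial>\<mu>) \<in> U} | f U. f \<in> Cc (CN_top N) \<and> open U}"
  let ?Y = "topology_generated_by ?\<S>"
  let ?B = "{\<mu> \<in> SCurr N. (\<integral>S. f S \<partial>\<mu>) \<in> U}"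
  have B: "?B \<in> ?\<S>" using f oU by blast
  then have oB: "openin ?Y ?B" by (rule topology_generated_by_Basis)
  have ts: "topspace (weakstar N) = topspace ?Y \<inter> SCurr N"
    unfolding weakstar_def topspace_subtopology ..
  have "{x \<in> topspace (weakstar N). (\<integral>S. f S \<partial>x) \<in> U} = ?B \<inter> SCurr N"
    unfolding ts using openin_subset[OF oB] by blast
  moreover have "openin (weakstar N) (?B \<inter> SCurr N)"
    unfolding weakstar_def openin_subtopology using oB by blast
  ultimately show "openin (weakstar N) {x \<in> topspace (weakstar N). (\<integral>S. f S \<partial>x) \<in> U}" by simp
qed

lemma topspace_weakstar_sub: "topspace (weakstar N) \<subseteq> SCurr N"
  unfolding weakstar_def by simp

text \<open>The mass of a pattern set with two distinct words is a weak-* continuous function of the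
  current: its indicator is continuous and compactly supported.\<close>
lemma measure_pattern_continuous:
  assumes A: "A \<subseteq> words N L" "p \<in> A" "q \<in> A" "p \<noteq> q"
  shows "continuous_map (weakstar N) euclideanreal (\<lambda>\<mu>. measure \<mu> (pattern N L A))"
proof -
  have cc: "indicator (pattern N L A) \<in> Cc (CN_top N)"
    unfolding Cc_def
  proof (intro CollectI conjI exI)
    show "continuous_map (CN_top N) euclideanreal (indicator (pattern N L A))" by (rule indicator_pattern_cont)
    show "compactin (CN_top N) (pattern N L A)" by (rule pattern_compact[OF A])
    show "\<forall>x\<in>topspace (CN_top N) - pattern N L A. (indicator (pattern N L A) x :: real) = 0" by simp
  qed
  show ?thesis
  proof (rule continuous_map_eq[OF weakstar_cont[OF cc]])
    fix \<mu> assume "\<mu> \<in> topspace (weakstar N)"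
    then have "\<mu> \<in> SCurr N" using topspace_weakstar_sub by blast
    then have "space \<mu> = CN N" using pattern_finite_space[OF SCurr_pattern_finite] by blast
    then show "(\<integral>S. indicator (pattern N L A) S \<partial>\<mu>) = measure \<mu> (pattern N L A)"
      using pattern_sub[of N L A] by (simp add: Int_absorb2)
  qed
qed

text \<open>Continuity in part (3): a finite sum of products of continuous functions.\<close>
lemma RR_measure_continuous:
  assumes T: "finite T" "[] \<in> T"
  shows "continuous_map (prod_topology (weakstar N) (weakstar N)) euclideanreal
         (\<lambda>(\<mu>, \<nu>). measure (\<mu> \<Otimes>\<^sub>M \<nu>) (RR N T))"
proof -
  let ?L = "level T"
  have c: "continuous_map (prod_topology (weakstar N) (weakstar N)) euclideanreal
     (\<lambda>x. \<Sum>AB\<in>admissible N T. measure (fst x) (pattern N ?L (fst AB)) * measure (snd x) (pattern N ?L (snd AB)))"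
  proof (rule continuous_map_sum[OF finite_admissible])
    fix AB assume AB: "AB \<in> admissible N T"
    obtain A B where AB': "AB = (A, B)" by (cases AB)
    have g: "A \<subseteq> words N ?L \<and> B \<subseteq> words N ?L \<and> (\<exists>p\<in>A. \<exists>q\<in>A. p \<noteq> q) \<and> (\<exists>p\<in>B. \<exists>q\<in>B. p \<noteq> q)"
      using admissible_two[of A B N T] AB AB' T by simp
    then obtain p q p' q' where pq: "p \<in> A" "q \<in> A" "p \<noteq> q" "p' \<in> B" "q' \<in> B" "p' \<noteq> q'" by blast
    have c1: "continuous_map (weakstar N) euclideanreal (\<lambda>\<mu>. measure \<mu> (pattern N ?L A))"
      using measure_pattern_continuous[of A N ?L p q] g pq by blast
    have c2: "continuous_map (weakstar N) euclideanreal (\<lambda>\<mu>. measure \<mu> (pattern N ?L B))"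
      using measure_pattern_continuous[of B N ?L p' q'] g pq by blast
    have "continuous_map (prod_topology (weakstar N) (weakstar N)) euclideanreal
        (\<lambda>x. measure (fst x) (pattern N ?L A) * measure (snd x) (pattern N ?L B))"
      using continuous_map_real_mult[OF continuous_map_compose[OF continuous_map_fst c1]
          continuous_map_compose[OF continuous_map_snd c2]]
      by (simp add: o_def)
    then show "continuous_map (prod_topology (weakstar N) (weakstar N)) euclideanreal
        (\<lambda>x. measure (fst x) (pattern N ?L (fst AB)) * measure (snd x) (pattern N ?L (snd AB)))"
      using AB' by simp
  qed
  show ?thesis
  proof (rule continuous_map_eq[OF c])
    fix x assume "x \<in> topspace (prod_topology (weakstar N) (weakstar N))"
    then have x: "fst x \<in> SCurr N" "snd x \<in> SCurr N" using topspace_weakstar_sub[of N]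
      by (auto simp: topspace_prod_topology)
    show "(\<Sum>AB\<in>admissible N T. measure (fst x) (pattern N ?L (fst AB)) * measure (snd x) (pattern N ?L (snd AB)))
        = (case x of (\<mu>, \<nu>) \<Rightarrow> measure (\<mu> \<Otimes>\<^sub>M \<nu>) (RR N T))"
      using measure_RR_sum[OF SCurr_pattern_finite[OF x(1)] SCurr_pattern_finite[OF x(2)] T] by (simp add: split_beta)
  qed
qed

lemma measure_comb:
  assumes n: "pattern_finite N \<mu>" "pattern_finite N \<mu>'" and ab: "a \<ge> 0" "b \<ge> 0" and X: "X \<in> sets \<mu>"
    and f: "emeasure \<mu> X < \<infinity>" "emeasure \<mu>' X < \<infinity>"
  shows "measure (madd (msc a \<mu>) (msc b \<mu>')) X = a * measure \<mu> X + b * measure \<mu>' X"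
proof -
  have "emeasure (madd (msc a \<mu>) (msc b \<mu>')) X = ennreal a * emeasure \<mu> X + ennreal b * emeasure \<mu>' X"
    by (rule pattern_finite_comb(2)[OF n ab X])
  also have "\<dots> = ennreal (a * measure \<mu> X) + ennreal (b * measure \<mu>' X)"
    using f ab by (simp add: emeasure_eq_ennreal_measure ennreal_mult)
  also have "\<dots> = ennreal (a * measure \<mu> X + b * measure \<mu>' X)"
    using ab by (simp add: ennreal_plus)
  finally have "emeasure (madd (msc a \<mu>) (msc b \<mu>')) X = ennreal (a * measure \<mu> X + b * measure \<mu>' X)" .
  moreover have "a * measure \<mu> X + b * measure \<mu>' X \<ge> 0" using ab by simp
  ultimately show ?thesis unfolding measure_def by simp
qed

lemma measure_pattern_comb:
  assumes n: "pattern_finite N \<mu>" "pattern_finite N \<mu>'" and ab: "a \<ge> 0" "b \<ge> 0"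
    and AB: "AB \<in> admissible N T" and T: "[] \<in> T" and A: "A = fst AB \<or> A = snd AB"
  shows "measure (madd (msc a \<mu>) (msc b \<mu>')) (pattern N (level T) A)
       = a * measure \<mu> (pattern N (level T) A) + b * measure \<mu>' (pattern N (level T) A)"
  using measure_comb[OF n ab pattern_finite_pattern[OF n(1)]] admissible_fin[OF n(1) AB T]
    admissible_fin[OF n(2) AB T] A by auto

lemma RR_measure_linear_left:
  assumes T: "finite T" "[] \<in> T" and n: "pattern_finite N \<mu>" "pattern_finite N \<mu>'" "pattern_finite N \<nu>"
    and ab: "a \<ge> 0" "b \<ge> 0"
  shows "measure (madd (msc a \<mu>) (msc b \<mu>') \<Otimes>\<^sub>M \<nu>) (RR N T)
       = a * measure (\<mu> \<Otimes>\<^sub>M \<nu>) (RR N T) + b * measure (\<mu>' \<Otimes>\<^sub>M \<nu>) (RR N T)"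
proof -
  let ?m = "madd (msc a \<mu>) (msc b \<mu>')" and ?P = "pattern N (level T)"
  have "measure (?m \<Otimes>\<^sub>M \<nu>) (RR N T)
      = (\<Sum>AB\<in>admissible N T. measure ?m (?P (fst AB)) * measure \<nu> (?P (snd AB)))"
    by (rule measure_RR_sum[OF pattern_finite_comb(1)[OF n(1,2) ab] n(3) T])
  also have "\<dots> = (\<Sum>AB\<in>admissible N T. a * (measure \<mu> (?P (fst AB)) * measure \<nu> (?P (snd AB)))
        + b * (measure \<mu>' (?P (fst AB)) * measure \<nu> (?P (snd AB))))"
    using measure_pattern_comb[OF n(1,2) ab _ T(2)] by (intro sum.cong) (simp_all add: algebra_simps)
  also have "\<dots> = a * measure (\<mu> \<Otimes>\<^sub>M \<nu>) (RR N T) + b * measure (\<mu>' \<Otimes>\<^sub>M \<nu>) (RR N T)"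
    unfolding measure_RR_sum[OF n(1,3) T] measure_RR_sum[OF n(2,3) T]
    by (simp add: sum.distrib sum_distrib_left)
  finally show ?thesis .
qed

lemma RR_measure_linear_right:
  assumes T: "finite T" "[] \<in> T" and n: "pattern_finite N \<mu>" "pattern_finite N \<mu>'" "pattern_finite N \<nu>"
    and ab: "a \<ge> 0" "b \<ge> 0"
  shows "measure (\<nu> \<Otimes>\<^sub>M madd (msc a \<mu>) (msc b \<mu>')) (RR N T)
       = a * measure (\<nu> \<Otimes>\<^sub>M \<mu>) (RR N T) + b * measure (\<nu> \<Otimes>\<^sub>M \<mu>') (RR N T)"
proof -
  let ?m = "madd (msc a \<mu>) (msc b \<mu>')" and ?P = "pattern N (level T)"
  have "measure (\<nu> \<Otimes>\<^sub>M ?m) (RR N T)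
      = (\<Sum>AB\<in>admissible N T. measure \<nu> (?P (fst AB)) * measure ?m (?P (snd AB)))"
    by (rule measure_RR_sum[OF n(3) pattern_finite_comb(1)[OF n(1,2) ab] T])
  also have "\<dots> = (\<Sum>AB\<in>admissible N T. a * (measure \<nu> (?P (fst AB)) * measure \<mu> (?P (snd AB)))
        + b * (measure \<nu> (?P (fst AB)) * measure \<mu>' (?P (snd AB))))"
    using measure_pattern_comb[OF n(1,2) ab _ T(2)] by (intro sum.cong) (simp_all add: algebra_simps)
  also have "\<dots> = a * measure (\<nu> \<Otimes>\<^sub>M \<mu>) (RR N T) + b * measure (\<nu> \<Otimes>\<^sub>M \<mu>') (RR N T)"
    unfolding measure_RR_sum[OF n(3,1) T] measure_RR_sum[OF n(3,2) T]
    by (simp add: sum.distrib sum_distrib_left)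
  finally show ?thesis .
qed

theorem mainTheorem8:
  fixes N :: nat and T T' :: "letter list set"
  assumes "N \<ge> 2" and "T \<in> SubX1 N" and "T' \<in> SubX1 N"
  shows "(T \<noteq> T' \<longrightarrow> RR N T \<inter> RR N T' = {})
    \<and> ((\<exists>g\<in>FN N. gmul g ` T = T') \<longrightarrow>
         (\<forall>\<mu>\<in>SCurr N. \<forall>\<nu>\<in>SCurr N.
            emeasure (\<mu> \<Otimes>\<^sub>M \<nu>) (RR N T) = emeasure (\<mu> \<Otimes>\<^sub>M \<nu>) (RR N T')))
    \<and> (\<forall>\<mu>\<in>SCurr N. \<forall>\<nu>\<in>SCurr N. emeasure (\<mu> \<Otimes>\<^sub>M \<nu>) (RR N T) < \<infinity>)
    \<and> continuous_map (prod_topology (weakstar N) (weakstar N)) euclideanreal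
         (\<lambda>(\<mu>, \<nu>). measure (\<mu> \<Otimes>\<^sub>M \<nu>) (RR N T))
    \<and> (\<forall>\<mu>\<in>SCurr N. \<forall>\<mu>'\<in>SCurr N. \<forall>\<nu>\<in>SCurr N. \<forall>a b :: real. a \<ge> 0 \<longrightarrow> b \<ge> 0 \<longrightarrow>
         measure (madd (msc a \<mu>) (msc b \<mu>') \<Otimes>\<^sub>M \<nu>) (RR N T)
           = a * measure (\<mu> \<Otimes>\<^sub>M \<nu>) (RR N T) + b * measure (\<mu>' \<Otimes>\<^sub>M \<nu>) (RR N T)
       \<and> measure (\<nu> \<Otimes>\<^sub>M madd (msc a \<mu>) (msc b \<mu>')) (RR N T)
           = a * measure (\<nu> \<Otimes>\<^sub>M \<mu>) (RR N T) + b * measure (\<nu> \<Otimes>\<^sub>M \<mu>') (RR N T))"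
proof (intro conjI)
  have T: "T \<subseteq> FN N" "finite T" "[] \<in> T" using assms(2) by (auto simp: SubX1_def)
  show "T \<noteq> T' \<longrightarrow> RR N T \<inter> RR N T' = {}" by (auto simp: RR_def)
  show "(\<exists>g\<in>FN N. gmul g ` T = T') \<longrightarrow>
      (\<forall>\<mu>\<in>SCurr N. \<forall>\<nu>\<in>SCurr N. emeasure (\<mu> \<Otimes>\<^sub>M \<nu>) (RR N T) = emeasure (\<mu> \<Otimes>\<^sub>M \<nu>) (RR N T'))"
    using RR_measure_translate[OF _ T] by metis
  show "\<forall>\<mu>\<in>SCurr N. \<forall>\<nu>\<in>SCurr N. emeasure (\<mu> \<Otimes>\<^sub>M \<nu>) (RR N T) < \<infinity>"
    by (intro ballI RR_fin[OF SCurr_pattern_finite SCurr_pattern_finite T(2,3)])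
  show "continuous_map (prod_topology (weakstar N) (weakstar N)) euclideanreal
      (\<lambda>(\<mu>, \<nu>). measure (\<mu> \<Otimes>\<^sub>M \<nu>) (RR N T))"
    by (rule RR_measure_continuous[OF T(2,3)])
  show "\<forall>\<mu>\<in>SCurr N. \<forall>\<mu>'\<in>SCurr N. \<forall>\<nu>\<in>SCurr N. \<forall>a b :: real. a \<ge> 0 \<longrightarrow> b \<ge> 0 \<longrightarrow>
      measure (madd (msc a \<mu>) (msc b \<mu>') \<Otimes>\<^sub>M \<nu>) (RR N T)
        = a * measure (\<mu> \<Otimes>\<^sub>M \<nu>) (RR N T) + b * measure (\<mu>' \<Otimes>\<^sub>M \<nu>) (RR N T)
    \<and> measure (\<nu> \<Otimes>\<^sub>M madd (msc a \<mu>) (msc b \<mu>')) (RR N T)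
        = a * measure (\<nu> \<Otimes>\<^sub>M \<mu>) (RR N T) + b * measure (\<nu> \<Otimes>\<^sub>M \<mu>') (RR N T)"
    by (intro ballI allI impI conjI RR_measure_linear_left[OF T(2,3)] RR_measure_linear_right[OF T(2,3)]
        SCurr_pattern_finite)
qed

end
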